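(* Let $u_h^*\in\mathcal S_{h,p+1}$ be a discrete ground state with multiplier $\lambda^*$. (i) Under (A1), there exists $\delta>0$ such that for any $u_h\in U_{h,\delta}(u_h^* )$ written as $u_h=(1+r)u_h^*+\xi_h$ with $r\in\mathbb R$, $\xi_h\in\mathcal T_{u_h^*,h}$, the relation $\|u_h\|_{h,p+1}=1$ determines $r$ uniquely as a $C^2$ map $\xi_h\mapsto r(\xi_h)$ from a neighborhood of $0$ in $\mathcal T_{u_h^*,h}$ to a neighborhood of $0$ in $\mathbb R$, with $r(0)=0$ and $|r(\xi_h)|\lesssim\|\xi_h\|_{h,p+1}^2\lesssim\|\xi_h\|_{1,h}^2$. (ii) If in addition (A2') holds and there is $c>0$ with $$\mathcal D^2_uL_h(u_h^*,\lambda^* )[\xi_h,\xi_h]=2\big(\langle\mathcal A_h\xi_h,\xi_h\rangle_h-p\lambda^*\langle|u_h^*|^{p-1}\xi_h,\xi_h\rangle_h\big)\ge c\|\xi_h\|_{1,h}^2\quad\forall\xi_h\in\mathcal T_{u_h^*,h},$$ then for sufficiently small $\delta>0$, $Q_h(u_h)-Q_h(u_h^* )\asymp\|u_h-u_h^*\|_{1,h}^2$ for all $u_h\in U_{h,\delta}(u_h^* )\cap\mathcal S_{h,p+1}$, and $u_h^*$ is the unique minimizer of $Q_h$ over $U_{h,\delta}(u_h^* )\cap\mathcal S_{h,p+1}$.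
   Context: Fully discrete setting ($d=1$), real-valued grid functions. $\Omega=[x_0,x_0+L]$, $M>0$ even, $h=L/M$, grid $x_j=x_0+jh$, $j\in\Gamma_h=\{0,\dots,M-1\}$, periodic; $X_h=\mathbb R^M$. $\varphi_j(x)=\frac1M\sum_{l=-M/2}^{M/2}\frac1{a_l}e^{\mathrm il\sigma(x-x_j)}$, $a_l=1$ ($|l|<M/2$), $a_l=2$ ($|l|=M/2$), $\sigma=2\pi/L$; $(\mathbf D_{xx})_{j,l}=\varphi_l''(x_j)$. $\langle u_h,v_h\rangle_h=h\sum_ju_jv_j$, $\|u_h\|_h^2=\langle u_h,u_h\rangle_h$, $|u_h|_{1,h}^2=\langle-\mathbf D_{xx}u_h,u_h\rangle_h$, $\|u_h\|_{1,h}^2=\|u_h\|_h^2+|u_h|_{1,h}^2$, $\|u_h\|_{h,q}=(h\sum_j|u_j|^q)^{1/q}$. $V_j=V(x_j)$; $Q_h(u_h)=\frac12|u_h|_{1,h}^2+h\sum_jV_j|u_j|^2+\omega\|u_h\|_h^2$; $(\mathcal A_hu_h)_j=-\frac12(\mathbf D_{xx}u_h)_j+(V_j+\omega)u_j$, so $Q_h(u_h)=\langle\mathcal A_hu_h,u_h\rangle_h$. $\mathcal S_{h,p+1}=\{u_h:\|u_h\|_{h,p+1}=1\}$. (A1): $1<p<\infty$, $V\ge0$ bounded. $\lambda_0':=\inf\{\frac12|u_h|_{1,h}^2+h\sum_jV_j|u_j|^2:\|u_h\|_h=1\}$; (A2'): $\omega>-\lambda_0'$. A discrete ground state is $u_h^*\in\arg\min\{Q_h(u_h):u_h\in\mathcal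 S_{h,p+1}\}$; it satisfies $(\mathcal A_hu_h^* )_j=\lambda^*|u_j^*|^{p-1}u_j^*$. $G_h(u_h)=\frac2{p+1}(\|u_h\|_{h,p+1}^{p+1}-1)$, $L_h(u_h,\lambda)=Q_h(u_h)-\lambda G_h(u_h)$. $\mathcal T_{u_h^*,h}=\{\xi_h\in X_h:\langle|u_h^*|^{p-1}u_h^*,\xi_h\rangle_h=0\}$. $U_{h,\delta}(u_h^* )=\{u_h:\|u_h-u_h^*\|_{1,h}\le\delta\}$. $a\lesssim b$ means $|a|\le Cb$ with $C$ independent of the function argument; $a\asymp b$ means both directions. *)

theory Defs
  imports "HOL-Analysis.Analysis" "HOL-Library.Numeral_Type"
begin

text \<open>Grid functions on M = CARD('m bit0) = 2*CARD('m) points (M even, M > 0).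
  The grid index of j is Rep_bit0 j in {0..<M}.  X_h = real^('m bit0).\<close>

type_synonym 'm grid = "real ^ ('m bit0)"

definition Mh :: "'m::finite itself \<Rightarrow> nat" where
  "Mh _ = CARD('m bit0)"

definition hh :: "real \<Rightarrow> 'm::finite itself \<Rightarrow> real" where
  "hh L T = L / real (Mh T)"

definition gridpt :: "real \<Rightarrow> real \<Rightarrow> 'm::finite bit0 \<Rightarrow> real" where
  "gridpt x0 L j = x0 + real_of_int (Rep_bit0 j) * hh L TYPE('m)"

definition acoef :: "nat \<Rightarrow> int \<Rightarrow> real" where
  "acoef M l = (if \<bar>l\<bar> = int M div 2 then 2 else 1)"

definition phi :: "real \<Rightarrow> real \<Rightarrow> 'm::finite bit0 \<Rightarrow> real \<Rightarrow> complex" where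
  "phi x0 L j x = (1 / of_nat (Mh TYPE('m))) *
     (\<Sum>l\<in>{- (int (Mh TYPE('m)) div 2) .. int (Mh TYPE('m)) div 2}.
        of_real (1 / acoef (Mh TYPE('m)) l) *
        exp (\<i> * of_int l * of_real (2 * pi / L) * of_real (x - gridpt x0 L j)))"

definition Dxx :: "real \<Rightarrow> real \<Rightarrow> 'm::finite bit0 \<Rightarrow> 'm bit0 \<Rightarrow> real" where
  "Dxx x0 L j l = Re (vector_derivative
      (\<lambda>x. vector_derivative (phi x0 L l) (at x)) (at (gridpt x0 L j)))"

definition Dxx_app :: "real \<Rightarrow> real \<Rightarrow> 'm::finite grid \<Rightarrow> 'm grid" where
  "Dxx_app x0 L u = (\<chi> j. \<Sum>l\<in>UNIV. Dxx x0 L j l * u $ l)"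

definition inner_h :: "real \<Rightarrow> 'm::finite grid \<Rightarrow> 'm grid \<Rightarrow> real" where
  "inner_h L u v = hh L TYPE('m) * (\<Sum>j\<in>UNIV. u $ j * v $ j)"

definition normsq_h :: "real \<Rightarrow> 'm::finite grid \<Rightarrow> real" where
  "normsq_h L u = inner_h L u u"

definition semi1sq_h :: "real \<Rightarrow> real \<Rightarrow> 'm::finite grid \<Rightarrow> real" where
  "semi1sq_h x0 L u = inner_h L (- Dxx_app x0 L u) u"

definition norm1_h :: "real \<Rightarrow> real \<Rightarrow> 'm::finite grid \<Rightarrow> real" where
  "norm1_h x0 L u = sqrt (normsq_h L u + semi1sq_h x0 L u)"

definition normq_h :: "real \<Rightarrow> real \<Rightarrow> 'm::finite grid \<Rightarrow> real" where
  "normq_h L q u = (hh L TYPE('m) * (\<Sum>j\<in>UNIV. \<bar>u $ j\<bar> powr q)) powr (1 / q)"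

definition Q_h :: "real \<Rightarrow> real \<Rightarrow> (real \<Rightarrow> real) \<Rightarrow> real \<Rightarrow> 'm::finite grid \<Rightarrow> real" where
  "Q_h x0 L V \<omega> u = semi1sq_h x0 L u / 2
     + hh L TYPE('m) * (\<Sum>j\<in>UNIV. V (gridpt x0 L j) * \<bar>u $ j\<bar>^2) + \<omega> * normsq_h L u"

definition A_h :: "real \<Rightarrow> real \<Rightarrow> (real \<Rightarrow> real) \<Rightarrow> real \<Rightarrow> 'm::finite grid \<Rightarrow> 'm grid" where
  "A_h x0 L V \<omega> u = (\<chi> j. - (Dxx_app x0 L u $ j) / 2 + (V (gridpt x0 L j) + \<omega>) * u $ j)"

definition S_h :: "real \<Rightarrow> real \<Rightarrow> 'm::finite grid set" where
  "S_h L p = {u. normq_h L (p + 1) u = 1}"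

definition powu :: "real \<Rightarrow> 'm::finite grid \<Rightarrow> 'm grid" where
  "powu p u = (\<chi> j. \<bar>u $ j\<bar> powr (p - 1) * u $ j)"

definition lambda0' :: "real \<Rightarrow> real \<Rightarrow> (real \<Rightarrow> real) \<Rightarrow> 'm::finite itself \<Rightarrow> real" where
  "lambda0' x0 L V T = Inf {semi1sq_h x0 L u / 2
        + hh L TYPE('m) * (\<Sum>j\<in>UNIV. V (gridpt x0 L j) * \<bar>u $ j\<bar>^2) | u :: 'm grid.
        normsq_h L u = 1}"

definition is_ground_state ::
  "real \<Rightarrow> real \<Rightarrow> (real \<Rightarrow> real) \<Rightarrow> real \<Rightarrow> real \<Rightarrow> 'm::finite grid \<Rightarrow> bool" where
  "is_ground_state x0 L V \<omega> p u \<longleftrightarrow>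
     u \<in> S_h L p \<and> (\<forall>v :: 'm grid \<in> S_h L p. Q_h x0 L V \<omega> u \<le> Q_h x0 L V \<omega> v)"

definition tangent_h :: "real \<Rightarrow> real \<Rightarrow> 'm::finite grid \<Rightarrow> 'm grid set" where
  "tangent_h L p us = {\<xi>. inner_h L (powu p us) \<xi> = 0}"

definition U_h :: "real \<Rightarrow> real \<Rightarrow> real \<Rightarrow> 'm::finite grid \<Rightarrow> 'm grid set" where
  "U_h x0 L \<delta> us = {u. norm1_h x0 L (u - us) \<le> \<delta>}"

definition C2_on :: "'a::real_normed_vector set \<Rightarrow> ('a \<Rightarrow> real) \<Rightarrow> bool" where
  "C2_on W f \<longleftrightarrow> (\<exists>f' :: 'a \<Rightarrow> ('a \<Rightarrow>\<^sub>L real). \<exists>f'' :: 'a \<Rightarrow> ('a \<Rightarrow>\<^sub>L ('a \<Rightarrow>\<^sub>L real)).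
      (\<forall>x\<in>W. (f has_derivative blinfun_apply (f' x)) (at x)) \<and>
      (\<forall>x\<in>W. (f' has_derivative blinfun_apply (f'' x)) (at x)) \<and>
      continuous_on W f'')"

end

theory Submission
  imports Defs
begin

(* Write G(v) = h * sum_j |v_j|^(p+1) (normq_pow below), so that S_{h,p+1} = {G = 1}; for p > 1,
   G is convex and C^2 with gradient (p+1) |v|^(p-1) v.

   (i) For a tangent vector xi, the function s |-> G((1+s) us + xi) - 1 is convex and, for small xi,
   changes sign on [-eps, eps]; its supporting lines make the zero r(xi) unique, and the implicit
   function theorem makes r a C^2 function. Bounding G((1 + r) us + xi) = G(us) from above by Taylor
   and from below by convexity gives |r(xi)| <= C |xi|^2.

   (ii) On the sphere, the second-order Taylor expansion of G trades the first-order term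
   2 lambda <|us|^(p-1) us, e> of Q(us + e) for a second-order one, so that
   Q(u) - Q(us) = D^2 L[e, e] / 2 + o(|e|^2). Splitting e = s us + xi with xi tangent and
   |s| <= C |e|^2, coercivity of D^2 L on the tangent space gives the lower bound. *)

section \<open>Real powers of absolute values\<close>

lemma has_real_derivative_abs:
  fixes t :: real
  assumes "t \<noteq> 0"
  shows "(abs has_real_derivative sgn t) (at t)"
proof -
  have ev: "\<forall>\<^sub>F x in nhds t. \<bar>x\<bar> = sgn t * x"
  proof (cases "t > 0")
    case True
    then show ?thesis
      using eventually_nhds_in_open[of "{0<..}" t] by (auto elim: eventually_mono)
  next
    case False
    then have "t < 0" using assms by simp
    then show ?thesis
      using eventually_nhds_in_open[of "{..<0}" t] by (auto elim: eventually_mono)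
  qed
  moreover have "((\<lambda>x. sgn t * x) has_real_derivative sgn t) (at t)"
    by (auto intro!: derivative_eq_intros)
  ultimately show ?thesis
    using DERIV_cong_ev[OF refl ev refl] by blast
qed

lemma has_real_derivative_at_0_if_superlinear:
  fixes f :: "real \<Rightarrow> real"
  assumes "\<And>y. \<bar>f y\<bar> \<le> C * \<bar>y\<bar> powr q" and "q > 1"
  shows "(f has_real_derivative 0) (at 0)"
proof -
  have f0: "f 0 = 0" using assms(1)[of 0] assms(2) by simp
  have "((\<lambda>y. f y / y) \<longlongrightarrow> 0) (at 0)"
  proof (rule Lim_null_comparison)
    show "\<forall>\<^sub>F y in at 0. norm (f y / y) \<le> C * \<bar>y\<bar> powr (q - 1)"
    proof (rule eventually_at_filter[THEN iffD2], rule always_eventually, intro allI impI)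
      fix y :: real
      assume "y \<noteq> 0"
      then have "\<bar>y\<bar> powr q = \<bar>y\<bar> powr (q - 1) * \<bar>y\<bar>"
        by (simp add: powr_diff)
      then show "norm (f y / y) \<le> C * \<bar>y\<bar> powr (q - 1)"
        using assms(1)[of y] \<open>y \<noteq> 0\<close> by (simp add: abs_divide divide_le_eq mult.assoc)
    qed
    have "((\<lambda>y. \<bar>y\<bar> powr (q - 1)) \<longlongrightarrow> 0) (at 0)"
      by (rule tendsto_zero_powrI) (auto intro!: tendsto_eq_intros simp: assms)
    then show "((\<lambda>y. C * \<bar>y\<bar> powr (q - 1)) \<longlongrightarrow> 0) (at 0)"
      using tendsto_mult_right_zero by blast
  qed
  then show ?thesis
    using f0 by (simp add: has_field_derivative_iff)
qed

lemma abs_powr_mult_self: "\<bar>t\<bar> powr (p - 1) * t * t = \<bar>t\<bar> powr (p + 1)"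
  for t p :: real
proof (cases "t = 0")
  case False
  have "p + 1 = (p - 1) + 2"
    by simp
  then have "\<bar>t\<bar> powr (p + 1) = \<bar>t\<bar> powr ((p - 1) + 2)"
    by (simp only:)
  also have "\<dots> = \<bar>t\<bar> powr (p - 1) * \<bar>t\<bar> powr 2"
    by (rule powr_add)
  also have "\<bar>t\<bar> powr 2 = t * t"
    by (simp add: power2_eq_square)
  finally show ?thesis
    by (simp add: mult.assoc)
qed simp

lemma has_real_derivative_abs_powr_nonzero:
  fixes a t :: real
  assumes "t \<noteq> 0"
  shows "((\<lambda>x. \<bar>x\<bar> powr a) has_real_derivative a * \<bar>t\<bar> powr (a - 1) * sgn t) (at t)"
  using DERIV_chain2[OF has_real_derivative_powr[of "\<bar>t\<bar>" a] has_real_derivative_abs[OF assms]]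
    assms by simp

lemma has_real_derivative_abs_powr:
  fixes p t :: real
  assumes "0 < p"
  shows "((\<lambda>x. \<bar>x\<bar> powr (p + 1)) has_real_derivative (p + 1) * (\<bar>t\<bar> powr (p - 1) * t)) (at t)"
proof (cases "t = 0")
  case True
  have "((\<lambda>x. \<bar>x\<bar> powr (p + 1)) has_real_derivative 0) (at 0)"
    by (rule has_real_derivative_at_0_if_superlinear[of _ 1 "p + 1"]) (use assms in auto)
  with True show ?thesis by simp
next
  case False
  moreover have "\<bar>t\<bar> powr p * sgn t = \<bar>t\<bar> powr (p - 1) * t"
    using False by (simp add: powr_diff sgn_if)
  ultimately show ?thesis
    using has_real_derivative_abs_powr_nonzero[OF False, of "p + 1"] by (simp add: mult.assoc)
qed

lemma has_real_derivative_abs_powr_mult: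
  fixes p t :: real
  assumes "1 < p"
  shows "((\<lambda>x. \<bar>x\<bar> powr (p - 1) * x) has_real_derivative p * \<bar>t\<bar> powr (p - 1)) (at t)"
proof (cases "t = 0")
  case True
  have "((\<lambda>x. \<bar>x\<bar> powr (p - 1) * x) has_real_derivative 0) (at 0)"
  proof (rule has_real_derivative_at_0_if_superlinear[of _ 1 p])
    fix y :: real
    have "\<bar>\<bar>y\<bar> powr (p - 1) * y\<bar> = \<bar>y\<bar> powr p"
      by (cases "y = 0") (simp_all add: abs_mult powr_diff)
    then show "\<bar>\<bar>y\<bar> powr (p - 1) * y\<bar> \<le> 1 * \<bar>y\<bar> powr p"
      by simp
  qed (use assms in simp)
  with True assms show ?thesis by simp
next
  case False
  have D: "((\<lambda>x. \<bar>x\<bar> powr (p - 1) * x) has_real_derivative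
      (p - 1) * \<bar>t\<bar> powr (p - 1 - 1) * sgn t * t + 1 * \<bar>t\<bar> powr (p - 1)) (at t)"
    by (rule DERIV_mult[OF has_real_derivative_abs_powr_nonzero[OF False] DERIV_ident])
  have "\<bar>t\<bar> powr (p - 1 - 1) * sgn t * t = \<bar>t\<bar> powr (p - 1 - 1) * \<bar>t\<bar>"
    by (simp add: abs_sgn mult.assoc mult.commute[of t])
  also have "\<dots> = \<bar>t\<bar> powr (p - 1 - 1 + 1)"
    using False by (subst powr_add) simp
  finally have "(p - 1) * \<bar>t\<bar> powr (p - 1 - 1) * sgn t * t + 1 * \<bar>t\<bar> powr (p - 1)
      = p * \<bar>t\<bar> powr (p - 1)"
    by (simp add: mult.assoc left_diff_distrib)
  with D show ?thesis
    by simp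
qed

lemma continuous_on_abs_powr: "0 < a \<Longrightarrow> continuous_on S (\<lambda>t::real. \<bar>t\<bar> powr a)"
  by (intro continuous_on_powr' continuous_intros) auto

lemma abs_powr_taylor:
  fixes p x y :: real
  assumes "1 < p"
  shows "\<exists>t. min x y \<le> t \<and> t \<le> max x y \<and>
    \<bar>y\<bar> powr (p + 1) = \<bar>x\<bar> powr (p + 1) + (p + 1) * (\<bar>x\<bar> powr (p - 1) * x) * (y - x)
      + (p + 1) * p / 2 * \<bar>t\<bar> powr (p - 1) * (y - x)\<^sup>2"
proof (cases "y = x")
  case False
  define diff where "diff m = (if m = 0 then (\<lambda>t. \<bar>t\<bar> powr (p + 1))
    else if m = 1 then (\<lambda>t. (p + 1) * (\<bar>t\<bar> powr (p - 1) * t))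
    else (\<lambda>t. (p + 1) * (p * \<bar>t\<bar> powr (p - 1))))" for m :: nat
  have "\<forall>m t. m < 2 \<and> min x y \<le> t \<and> t \<le> max x y \<longrightarrow>
      (diff m has_real_derivative diff (Suc m) t) (at t)"
    using has_real_derivative_abs_powr[of p]
      DERIV_cmult[OF has_real_derivative_abs_powr_mult[OF assms]] assms
    by (auto simp: diff_def less_2_cases_iff)
  then obtain t where "if y < x then y < t \<and> t < x else x < t \<and> t < y"
    and "diff 0 y = (\<Sum>m<2. diff m x / fact m * (y - x) ^ m) + diff 2 t / fact 2 * (y - x) ^ 2"
    using Taylor[of 2 diff "diff 0" "min x y" "max x y" x y] False by (auto simp: diff_def)
  then show ?thesis
    by (intro exI[of _ t]) (auto simp: diff_def numeral_2_eq_2 split: if_splits)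
qed (auto intro: exI[of _ x])

section \<open>Quadratic forms, implicit functions and \<open>C\<^sup>2\<close> maps\<close>

lemma power2_norm_vec: "(norm x)\<^sup>2 = (\<Sum>j\<in>UNIV. (x $ j)\<^sup>2)"
  for x :: "real ^ 'n"
  unfolding power2_norm_eq_inner by (simp add: inner_vec_def power2_eq_square)

lemma power2_norm_add_le: "(norm (a + b))\<^sup>2 \<le> 2 * (norm a)\<^sup>2 + 2 * (norm b)\<^sup>2"
  for a b :: "'a::real_normed_vector"
proof -
  have "(norm (a + b))\<^sup>2 \<le> (norm a + norm b)\<^sup>2"
    by (simp add: norm_triangle_ineq power_mono)
  also have "\<dots> \<le> 2 * (norm a)\<^sup>2 + 2 * (norm b)\<^sup>2"
    using sum_squares_bound[of "norm a" "norm b"] by (simp add: power2_eq_square algebra_simps)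
  finally show ?thesis .
qed

lemma quadratic_form_bound:
  fixes f :: "'a::euclidean_space \<Rightarrow> 'a"
  assumes "linear f"
  shows "\<exists>C\<ge>0. \<forall>x. \<bar>inner (f x) x\<bar> \<le> C * (norm x)\<^sup>2"
proof -
  obtain K where K: "\<And>x. norm (f x) \<le> norm x * K" "K > 0"
    using bounded_linear.pos_bounded assms linear_conv_bounded_linear by blast
  have "\<bar>inner (f x) x\<bar> \<le> K * (norm x)\<^sup>2" for x
    using Cauchy_Schwarz_ineq2[of "f x" x] mult_right_mono[OF K(1)[of x] norm_ge_zero[of x]]
    by (simp add: power2_eq_square mult_ac)
  with K(2) show ?thesis
    by (intro exI[of _ K]) auto
qed

lemma quadratic_form_add:
  fixes f :: "'a::real_inner \<Rightarrow> 'a"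
  assumes "linear f" and "\<And>x y. inner (f x) y = inner x (f y)"
  shows "inner (f (a + b)) (a + b) = inner (f a) a + 2 * inner (f a) b + inner (f b) b"
  using assms(2)[of b a] by (simp add: linear_add[OF assms(1)] inner_add inner_commute)

lemma implicit_linear_estimate:
  fixes a b \<sigma> k K \<eta> :: real
  assumes "\<bar>a\<bar> \<le> K * k" "\<bar>a + b * \<sigma>\<bar> \<le> \<eta> * (k + \<bar>\<sigma>\<bar>)" "2 * \<eta> \<le> \<bar>b\<bar>" "0 \<le> \<eta>" "b \<noteq> 0"
    "0 \<le> k"
  shows "\<bar>\<sigma> + a / b\<bar> \<le> \<eta> * (1 + (\<bar>b\<bar> + 2 * K) / \<bar>b\<bar>) / \<bar>b\<bar> * k"
proof -
  have "\<bar>b\<bar> * \<bar>\<sigma>\<bar> \<le> \<bar>a + b * \<sigma>\<bar> + \<bar>a\<bar>"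
    by (metis abs_mult abs_triangle_ineq4 add_diff_cancel_left')
  also have "\<dots> \<le> \<bar>b\<bar> / 2 * (k + \<bar>\<sigma>\<bar>) + K * k"
    using assms(1,2,6) mult_right_mono[OF assms(3), of "k + \<bar>\<sigma>\<bar>"] by simp
  finally have "\<bar>\<sigma>\<bar> \<le> (\<bar>b\<bar> + 2 * K) / \<bar>b\<bar> * k"
    using assms(5) by (simp add: field_simps)
  then have "\<eta> * \<bar>\<sigma>\<bar> \<le> \<eta> * ((\<bar>b\<bar> + 2 * K) / \<bar>b\<bar> * k)"
    using assms(4) by (rule mult_left_mono)
  then have "\<eta> * (k + \<bar>\<sigma>\<bar>) \<le> \<eta> * (1 + (\<bar>b\<bar> + 2 * K) / \<bar>b\<bar>) * k"
    by (simp add: algebra_simps)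
  moreover have "\<bar>\<sigma> + a / b\<bar> = \<bar>a + b * \<sigma>\<bar> / \<bar>b\<bar>"
    using assms(5) by (simp add: field_simps flip: abs_divide)
  ultimately show ?thesis
    using assms(2,5) by (simp add: divide_right_mono)
qed

lemma implicit_function_has_derivative:
  fixes H :: "'a::real_normed_vector \<times> real \<Rightarrow> real" and r :: "'a \<Rightarrow> real"
  assumes dH: "(H has_derivative (\<lambda>z. A (fst z) + b * snd z)) (at (x, r x))"
    and A: "bounded_linear A" and b: "b \<noteq> 0"
    and cont: "continuous (at x) r"
    and zero: "\<forall>\<^sub>F y in nhds x. H (y, r y) = 0"
  shows "(r has_derivative (\<lambda>k. - A k / b)) (at x)"
  unfolding has_derivative_at_alt
proof (intro conjI allI impI)
  show "bounded_linear (\<lambda>k. - A k / b)"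
    using bounded_linear_compose[OF bounded_linear_divide[of b] bounded_linear_minus[OF A]] by simp
  obtain K where K: "\<And>k. norm (A k) \<le> norm k * K" "K > 0"
    using bounded_linear.pos_bounded[OF A] by blast
  define C where "C = 1 + (\<bar>b\<bar> + 2 * K) / \<bar>b\<bar>"
  have C: "C > 0"
    using K b by (simp add: C_def add_pos_pos)
  fix e :: real
  assume e: "e > 0"
  define \<eta> where "\<eta> = min (\<bar>b\<bar> / 2) (e * \<bar>b\<bar> / C)"
  have \<eta>: "0 < \<eta>" "2 * \<eta> \<le> \<bar>b\<bar>" "\<eta> * C / \<bar>b\<bar> \<le> e"
    using b e C by (auto simp: \<eta>_def min_def field_simps)
  obtain d1 where d1: "d1 > 0" "\<And>z. norm (z - (x, r x)) < d1 \<Longrightarrow>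
      norm (H z - H (x, r x) - (A (fst (z - (x, r x))) + b * snd (z - (x, r x))))
        \<le> \<eta> * norm (z - (x, r x))"
    using dH[unfolded has_derivative_at_alt] \<eta>(1) by blast
  obtain d2 where d2: "d2 > 0" "\<And>y. dist y x < d2 \<Longrightarrow> dist (r y) (r x) < d1 / 2"
    using cont[unfolded continuous_at_eps_delta] d1(1) half_gt_zero by blast
  obtain d3 where d3: "d3 > 0" "\<And>y. dist y x < d3 \<Longrightarrow> H (y, r y) = 0"
    using zero[unfolded eventually_nhds_metric] by blast
  show "\<exists>d>0. \<forall>y. norm (y - x) < d \<longrightarrow> norm (r y - r x - - A (y - x) / b) \<le> e * norm (y - x)"
  proof (intro exI[of _ "min (d1 / 2) (min d2 d3)"] conjI allI impI)
    show "0 < min (d1 / 2) (min d2 d3)"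
      using d1 d2 d3 by simp
    fix y
    assume y: "norm (y - x) < min (d1 / 2) (min d2 d3)"
    have pair: "norm ((y, r y) - (x, r x)) \<le> norm (y - x) + \<bar>r y - r x\<bar>"
      using norm_Pair_le[of "y - x" "r y - r x"] by simp
    also have "\<dots> < d1"
      using y d2(2)[of y] by (simp add: dist_norm)
    finally have "norm ((y, r y) - (x, r x)) < d1" .
    moreover have "H (y, r y) = 0" "H (x, r x) = 0"
      using d3 y by (simp_all add: dist_norm)
    ultimately have "\<bar>A (y - x) + b * (r y - r x)\<bar> \<le> \<eta> * norm ((y, r y) - (x, r x))"
      using d1(2)[of "(y, r y)"] by simp
    also have "\<dots> \<le> \<eta> * (norm (y - x) + \<bar>r y - r x\<bar>)"
      using pair \<eta>(1) by (simp add: mult_left_mono)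
    finally have "\<bar>A (y - x) + b * (r y - r x)\<bar> \<le> \<eta> * (norm (y - x) + \<bar>r y - r x\<bar>)" .
    then have "\<bar>(r y - r x) + A (y - x) / b\<bar> \<le> \<eta> * C / \<bar>b\<bar> * norm (y - x)"
      using implicit_linear_estimate[of "A (y - x)" K "norm (y - x)" b "r y - r x" \<eta>] K \<eta> b
      by (simp add: C_def mult.commute)
    also have "\<dots> \<le> e * norm (y - x)"
      by (rule mult_right_mono[OF \<eta>(3) norm_ge_zero])
    finally show "norm (r y - r x - - A (y - x) / b) \<le> e * norm (y - x)"
      by simp
  qed
qed

lemma supporting_line_zero_crossing:
  fixes f f' :: "real \<Rightarrow> real"
  assumes tangent: "\<And>s t. f s + f' s * (t - s) \<le> f t"
    and "f a < 0" "a < z" "f z = 0"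
  shows "0 < f' z" and "\<And>t. z < t \<Longrightarrow> 0 < f t" and "\<And>t. a \<le> t \<Longrightarrow> t < z \<Longrightarrow> f t < 0"
proof -
  have "f' z * (z - a) > 0"
    using tangent[of z a] assms(2,4) by (simp add: algebra_simps)
  then show pos: "0 < f' z"
    using assms(3) by (simp add: zero_less_mult_iff)
  show "0 < f t" if "z < t" for t
    using tangent[of z t] pos that assms(4) by (smt (verit) mult_pos_pos)
  show "f t < 0" if "a \<le> t" "t < z" for t
  proof (rule ccontr)
    assume "\<not> f t < 0"
    then have "f' t \<le> 0"
      using tangent[of t z] that(2) assms(4) by (smt (verit) mult_pos_pos)
    then show False
      using tangent[of t a] that(1) assms(2) \<open>\<not> f t < 0\<close> by (smt (verit) mult_nonpos_nonpos)
  qed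
qed

lemma C2_on_gradientI:
  fixes f :: "'a::euclidean_space \<Rightarrow> real"
  assumes df: "\<And>x. x \<in> W \<Longrightarrow> (f has_derivative (\<lambda>k. inner (g x) k)) (at x)"
    and dg: "\<And>x. x \<in> W \<Longrightarrow> (g has_derivative g' x) (at x)"
    and cont: "\<And>l. continuous_on W (\<lambda>x. g' x l)"
  shows "C2_on W f"
proof -
  define f'' where "f'' x = Blinfun (\<lambda>l. blinfun_inner_left (g' x l))" for x
  have apply_f'': "blinfun_apply (f'' x) = (\<lambda>l. blinfun_inner_left (g' x l))" if "x \<in> W" for x
    unfolding f''_def using has_derivative_bounded_linear[OF dg[OF that]]
    by (intro bounded_linear_Blinfun_apply
        bounded_linear_compose[OF bounded_linear_blinfun_inner_left])
  have "\<forall>x\<in>W. (f has_derivative blinfun_apply (blinfun_inner_left (g x))) (at x)"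
    using df by (simp add: inner_commute)
  moreover have "\<forall>x\<in>W. ((\<lambda>x. blinfun_inner_left (g x)) has_derivative blinfun_apply (f'' x)) (at x)"
    using bounded_linear.has_derivative[OF bounded_linear_blinfun_inner_left dg]
    by (simp add: apply_f'')
  moreover have "continuous_on W f''"
  proof (rule continuous_on_blinfun_componentwise)
    fix i :: 'a
    show "continuous_on W (\<lambda>x. f'' x i)"
      using bounded_linear.continuous_on[OF bounded_linear_blinfun_inner_left cont[of i]]
      by (rule continuous_on_eq) (simp add: apply_f'')
  qed
  ultimately show ?thesis
    unfolding C2_on_def by (intro exI[of _ "\<lambda>x. blinfun_inner_left (g x)"] exI[of _ f'']) simp
qed

section \<open>The discrete operators and norms\<close>

lemma Dxx_eq_cos_sum:
  fixes j l :: "'m::finite bit0"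
  shows "Dxx x0 L j l = - (1 / real (Mh TYPE('m))) *
     (\<Sum>k\<in>{- (int (Mh TYPE('m)) div 2) .. int (Mh TYPE('m)) div 2}.
        (1 / acoef (Mh TYPE('m)) k) * (real_of_int k * (2 * pi / L))^2 *
        cos (real_of_int k * (2 * pi / L) * (gridpt x0 L j - gridpt x0 L l)))"
proof -
  define M where "M = Mh TYPE('m)"
  define K where "K = {- (int M div 2) .. int M div 2}"
  define \<sigma> where "\<sigma> = 2 * pi / L"
  define gl where "gl = gridpt x0 L l"
  define a where "a = (\<lambda>k::int. \<i> * of_int k * of_real \<sigma>)"
  (* F n is the holomorphic extension of the n-th derivative of phi_l. *)
  define F where "F = (\<lambda>n::nat. \<lambda>z::complex. (1 / of_nat M) *
     (\<Sum>k\<in>K. of_real (1 / acoef M k) * a k ^ n * exp (a k * (z - of_real gl))))"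
  have dF: "(F n has_field_derivative F (Suc n) z) (at z)" for n z
  proof -
    have "((\<lambda>z. (1 / of_nat M) *
          (\<Sum>k\<in>K. of_real (1 / acoef M k) * a k ^ n * exp (a k * (z - of_real gl))))
        has_field_derivative (1 / of_nat M) *
          (\<Sum>k\<in>K. of_real (1 / acoef M k) * a k ^ n * (a k * exp (a k * (z - of_real gl))))) (at z)"
      by (intro DERIV_cmult DERIV_sum) (auto intro!: derivative_eq_intros)
    then show ?thesis
      unfolding F_def by (simp add: mult_ac)
  qed
  have phiF: "phi x0 L l = (\<lambda>x. F 0 (of_real x))"
    by (auto simp: phi_def F_def M_def K_def a_def \<sigma>_def gl_def fun_eq_iff mult_ac)
  have v1: "(\<lambda>x. vector_derivative (phi x0 L l) (at x)) = (\<lambda>x. F 1 (of_real x))"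
  proof
    fix x :: real
    show "vector_derivative (phi x0 L l) (at x) = F 1 (of_real x)"
      unfolding phiF
      by (rule vector_derivative_at, rule has_vector_derivative_real_field) (use dF in simp)
  qed
  have v2: "vector_derivative (\<lambda>x. vector_derivative (phi x0 L l) (at x)) (at (gridpt x0 L j))
      = F 2 (of_real (gridpt x0 L j))"
    unfolding v1
    by (rule vector_derivative_at, rule has_vector_derivative_real_field)
      (use dF[of 1] in \<open>simp add: numeral_2_eq_2\<close>)
  have "Re (F 2 (of_real (gridpt x0 L j))) = (1 / real M) *
      (\<Sum>k\<in>K. (1 / acoef M k) * (- ((real_of_int k * \<sigma>)^2)) *
        cos (real_of_int k * \<sigma> * (gridpt x0 L j - gl)))"
    unfolding F_def a_def
    by (simp add: Re_sum power2_eq_square Re_exp mult_ac flip: of_real_diff)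
  then show ?thesis
    unfolding Dxx_def v2 M_def K_def \<sigma>_def gl_def by (simp add: sum_negf sum_distrib_left)
qed

lemma sum_sum_cos_diff_nonneg:
  fixes u a :: "'i \<Rightarrow> real"
  shows "0 \<le> (\<Sum>j\<in>I. \<Sum>l\<in>I. u j * u l * cos (a j - a l))"
proof -
  have "(\<Sum>j\<in>I. \<Sum>l\<in>I. u j * u l * cos (a j - a l)) =
      (\<Sum>j\<in>I. u j * cos (a j))\<^sup>2 + (\<Sum>j\<in>I. u j * sin (a j))\<^sup>2"
    by (simp add: cos_diff power2_eq_square sum_product distrib_left sum.distrib mult_ac)
  then show ?thesis
    by simp
qed

lemma Dxx_sym: "Dxx x0 L j l = Dxx x0 L l j"
  unfolding Dxx_eq_cos_sum
  by (rule arg_cong[where f="\<lambda>x. - _ * x"], rule sum.cong, simp)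
     (metis cos_minus minus_diff_eq mult_minus_right)

lemma inner_Dxx_app: "inner (Dxx_app x0 L u) v = (\<Sum>j\<in>UNIV. \<Sum>l\<in>UNIV. Dxx x0 L j l * u $ l * v $ j)"
  by (simp add: inner_vec_def Dxx_app_def sum_distrib_right)

lemma inner_Dxx_app_self_nonpos: "inner (Dxx_app x0 L u) u \<le> 0"
  for u :: "'m::finite grid"
proof -
  define M where "M = Mh TYPE('m)"
  define K where "K = {- (int M div 2) .. int M div 2}"
  define w where "w k = 1 / acoef M k * (real_of_int k * (2 * pi / L))\<^sup>2" for k
  define a where "a k j = real_of_int k * (2 * pi / L) * gridpt x0 L j" for k and j :: "'m bit0"
  have D: "Dxx x0 L j l = - (1 / real M) * (\<Sum>k\<in>K. w k * cos (a k j - a k l))" for j l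
    unfolding Dxx_eq_cos_sum M_def K_def w_def a_def by (simp add: right_diff_distrib)
  have "inner (Dxx_app x0 L u) u =
      - (1 / real M) * (\<Sum>k\<in>K. w k * (\<Sum>j\<in>UNIV. \<Sum>l\<in>UNIV. u $ j * u $ l * cos (a k j - a k l)))"
    unfolding inner_Dxx_app D
    by (simp add: sum_distrib_left sum_distrib_right sum_negf mult_ac sum.swap[of _ K])
  also have "\<dots> \<le> 0"
    by (intro mult_nonpos_nonneg sum_nonneg mult_nonneg_nonneg sum_sum_cos_diff_nonneg)
      (auto simp: w_def acoef_def)
  finally show ?thesis .
qed

lemma linear_Dxx_app: "linear (Dxx_app x0 L)"
  by (rule linearI)
    (simp_all add: Dxx_app_def vec_eq_iff algebra_simps sum.distrib sum_distrib_left)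

lemma inner_Dxx_app_commute: "inner (Dxx_app x0 L u) v = inner u (Dxx_app x0 L v)"
  unfolding inner_commute[of u] inner_Dxx_app
  by (subst sum.swap) (simp add: Dxx_sym mult_ac)

lemma inner_diagonal_commute: "inner (\<chi> j. c j * u $ j) v = inner u (\<chi> j. c j * v $ j)"
  for c :: "'n::finite \<Rightarrow> real"
  by (simp add: inner_vec_def mult_ac)

lemma A_h_eq:
  "A_h x0 L V \<omega> u = - (1 / 2) *\<^sub>R Dxx_app x0 L u + (\<chi> j. (V (gridpt x0 L j) + \<omega>) * u $ j)"
  by (simp add: A_h_def vec_eq_iff)

lemma linear_A_h: "linear (A_h x0 L V \<omega>)"
  by (rule linearI)
    (simp_all add: A_h_eq linear_add[OF linear_Dxx_app] linear_scale[OF linear_Dxx_app]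
      vec_eq_iff algebra_simps)

lemma inner_A_h_commute: "inner (A_h x0 L V \<omega> u) v = inner u (A_h x0 L V \<omega> v)"
  by (simp add: A_h_eq inner_add inner_diff_left inner_diff_right inner_Dxx_app_commute
      inner_diagonal_commute)

lemma inner_h_eq: "inner_h L u v = hh L TYPE('m) * inner u v"
  for u v :: "'m::finite grid"
  by (simp add: inner_h_def inner_vec_def)

lemma hh_pos: "0 < L \<Longrightarrow> 0 < hh L TYPE('m::finite)"
  by (simp add: hh_def Mh_def)

lemma Q_h_eq_inner_h: "Q_h x0 L V \<omega> u = inner_h L (A_h x0 L V \<omega> u) u"
  for u :: "'m::finite grid"
proof -
  have "Q_h x0 L V \<omega> u = hh L TYPE('m) * (- inner (Dxx_app x0 L u) u / 2
      + (\<Sum>j\<in>UNIV. V (gridpt x0 L j) * \<bar>u $ j\<bar>\<^sup>2) + \<omega> * inner u u)"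
    by (simp add: Q_h_def semi1sq_h_def normsq_h_def inner_h_eq algebra_simps)
  also have "- inner (Dxx_app x0 L u) u / 2 + (\<Sum>j\<in>UNIV. V (gridpt x0 L j) * \<bar>u $ j\<bar>\<^sup>2)
      + \<omega> * inner u u = inner (A_h x0 L V \<omega> u) u"
    unfolding A_h_eq inner_add_left
    by (simp add: inner_vec_def power2_eq_square algebra_simps sum.distrib sum_distrib_left
        sum_negf sum_divide_distrib)
  finally show ?thesis
    by (simp add: inner_h_eq)
qed

lemma semi1sq_h_nonneg: "0 < L \<Longrightarrow> 0 \<le> semi1sq_h x0 L u"
  for u :: "'m::finite grid"
  using inner_Dxx_app_self_nonpos[of x0 L u] hh_pos[of L, where 'm='m]
  by (simp add: semi1sq_h_def inner_h_eq mult_nonneg_nonpos)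

lemma norm1_h_nonneg: "0 < L \<Longrightarrow> 0 \<le> norm1_h x0 L u"
  for u :: "'m::finite grid"
  using semi1sq_h_nonneg[of L x0 u] hh_pos[of L, where 'm = 'm]
  by (simp add: norm1_h_def normsq_h_def inner_h_eq)

lemma norm1_h_sq:
  fixes u :: "'m::finite grid"
  assumes "0 < L"
  shows "(norm1_h x0 L u)\<^sup>2 = hh L TYPE('m) * (norm u)\<^sup>2 + semi1sq_h x0 L u"
  using semi1sq_h_nonneg[OF assms, of x0 u] hh_pos[OF assms, where 'm='m]
  by (simp add: norm1_h_def normsq_h_def inner_h_eq power2_norm_eq_inner)

lemma norm1_h_lower:
  fixes u :: "'m::finite grid"
  assumes "0 < L"
  shows "hh L TYPE('m) * (norm u)\<^sup>2 \<le> (norm1_h x0 L u)\<^sup>2"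
  using norm1_h_sq[OF assms, of x0 u] semi1sq_h_nonneg[OF assms, of x0 u] by simp

lemma norm1_h_upper:
  assumes "0 < L"
  shows "\<exists>C>0. \<forall>u :: 'm::finite grid. (norm1_h x0 L u)\<^sup>2 \<le> C * (norm u)\<^sup>2"
proof -
  obtain K where K: "K \<ge> 0" "\<And>u :: 'm grid. \<bar>inner (Dxx_app x0 L u) u\<bar> \<le> K * (norm u)\<^sup>2"
    using quadratic_form_bound[OF linear_Dxx_app] by blast
  let ?h = "hh L TYPE('m)"
  have "(norm1_h x0 L u)\<^sup>2 \<le> (?h + ?h * K) * (norm u)\<^sup>2" for u :: "'m grid"
  proof -
    have "semi1sq_h x0 L u = ?h * - inner (Dxx_app x0 L u) u"
      by (simp add: semi1sq_h_def inner_h_eq)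
    also have "\<dots> \<le> ?h * (K * (norm u)\<^sup>2)"
      using K(2)[of u] hh_pos[OF assms, where 'm='m] by (intro mult_left_mono) auto
    finally show ?thesis
      by (simp add: norm1_h_sq[OF assms] distrib_right)
  qed
  moreover have "0 < ?h + ?h * K"
    using K(1) hh_pos[OF assms, where 'm='m] by (simp add: add_pos_nonneg)
  ultimately show ?thesis
    by blast
qed

lemma normq_h_le_norm:
  fixes u :: "'m::finite grid"
  assumes "0 < L" "0 < q"
  shows "normq_h L q u \<le> (hh L TYPE('m) * CARD('m bit0)) powr (1 / q) * norm u"
proof -
  let ?h = "hh L TYPE('m)"
  have "(\<Sum>j\<in>UNIV. \<bar>u $ j\<bar> powr q) \<le> (\<Sum>j\<in>(UNIV :: 'm bit0 set). norm u powr q)"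
    using assms(2) by (intro sum_mono powr_mono2) (auto simp: component_le_norm_cart)
  then have "?h * (\<Sum>j\<in>UNIV. \<bar>u $ j\<bar> powr q) \<le> ?h * CARD('m bit0) * norm u powr q"
    using hh_pos[OF assms(1), where 'm = 'm] by (simp add: mult.assoc)
  then have "normq_h L q u \<le> (?h * CARD('m bit0) * norm u powr q) powr (1 / q)"
    unfolding normq_h_def using assms hh_pos[OF assms(1), where 'm = 'm]
    by (intro powr_mono2) (auto intro!: mult_nonneg_nonneg sum_nonneg)
  also have "\<dots> = (?h * CARD('m bit0)) powr (1 / q) * norm u"
    using assms hh_pos[OF assms(1), where 'm = 'm] by (simp add: powr_mult powr_powr)
  finally show ?thesis .
qed

lemma norm_le_normq_h:
  fixes u :: "'m::finite grid"
  assumes "0 < L" "0 < q"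
  shows "norm u \<le> CARD('m bit0) / hh L TYPE('m) powr (1 / q) * normq_h L q u"
proof -
  let ?h = "hh L TYPE('m)"
  have h: "0 < ?h"
    using hh_pos[OF assms(1)] .
  have "?h powr (1 / q) * \<bar>u $ j\<bar> \<le> normq_h L q u" for j
  proof -
    have "?h * \<bar>u $ j\<bar> powr q \<le> ?h * (\<Sum>j\<in>UNIV. \<bar>u $ j\<bar> powr q)"
      using h by (intro mult_left_mono member_le_sum) auto
    then have "(?h * \<bar>u $ j\<bar> powr q) powr (1 / q) \<le> normq_h L q u"
      unfolding normq_h_def using h assms(2) by (intro powr_mono2) auto
    then show ?thesis
      using h assms(2) by (simp add: powr_mult powr_powr)
  qed
  then have "\<bar>u $ j\<bar> \<le> normq_h L q u / ?h powr (1 / q)" for j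
    using h by (simp add: le_divide_eq mult.commute)
  then have "(\<Sum>j\<in>UNIV. \<bar>u $ j\<bar>) \<le> (\<Sum>j\<in>(UNIV :: 'm bit0 set). normq_h L q u / ?h powr (1 / q))"
    by (intro sum_mono)
  then show ?thesis
    using norm_le_l1_cart[of u] by simp
qed

lemma normq_h_sq_le_norm1_h_sq:
  assumes "0 < L" "0 < q"
  shows "\<exists>C. \<forall>u :: 'm::finite grid. (normq_h L q u)\<^sup>2 \<le> C * (norm1_h x0 L u)\<^sup>2"
proof -
  let ?h = "hh L TYPE('m)"
  let ?a = "(?h * CARD('m bit0)) powr (1 / q)"
  have "(normq_h L q u)\<^sup>2 \<le> ?a\<^sup>2 / ?h * (norm1_h x0 L u)\<^sup>2" for u :: "'m grid"
  proof -
    have "(normq_h L q u)\<^sup>2 \<le> (?a * norm u)\<^sup>2"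
      using normq_h_le_norm[OF assms, of u] by (intro power_mono) (simp_all add: normq_h_def)
    also have "\<dots> = ?a\<^sup>2 / ?h * (?h * (norm u)\<^sup>2)"
      using hh_pos[OF assms(1), where 'm = 'm] by (simp add: power_mult_distrib)
    also have "\<dots> \<le> ?a\<^sup>2 / ?h * (norm1_h x0 L u)\<^sup>2"
      using norm1_h_lower[OF assms(1), of u x0] hh_pos[OF assms(1), where 'm = 'm]
      by (intro mult_left_mono) auto
    finally show ?thesis .
  qed
  then show ?thesis
    by blast
qed

lemma has_derivative_powu:
  fixes v :: "'m::finite grid" and p :: real
  assumes "1 < p"
  shows "(powu p has_derivative (\<lambda>k. \<chi> j. k $ j * (p * \<bar>v $ j\<bar> powr (p - 1)))) (at v within S)"
proof -
  have component: "((\<lambda>x. powu p x $ j) has_derivative (\<lambda>k. k $ j * (p * \<bar>v $ j\<bar> powr (p - 1))))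
      (at v within S)" for j
    unfolding powu_def vec_lambda_beta
    by (rule DERIV_compose_FDERIV[OF has_real_derivative_abs_powr_mult[OF assms]
        bounded_linear_imp_has_derivative[OF bounded_linear_vec_nth]])
  show ?thesis
  proof (rule has_derivative_componentwise_within[THEN iffD2], rule ballI)
    fix i :: "'m grid"
    assume "i \<in> Basis"
    then obtain j where "i = axis j 1"
      by (auto simp: Basis_vec_def)
    then show "((\<lambda>x. powu p x \<bullet> i) has_derivative
        (\<lambda>k. (\<chi> j. k $ j * (p * \<bar>v $ j\<bar> powr (p - 1))) \<bullet> i)) (at v within S)"
      using component[of j] by (simp add: inner_axis)
  qed
qed

lemma continuous_on_powu: "1 < p \<Longrightarrow> continuous_on S (powu p)"
  by (rule has_derivative_continuous_on, rule has_derivative_powu)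

section \<open>Normalisation near a point of the unit sphere\<close>

locale sphere_point =
  fixes L p :: real and us :: "'m::finite grid"
  assumes L_pos: "0 < L" and p_gt_1: "1 < p" and us_unit: "normq_h L (p + 1) us = 1"
begin

definition h :: real where "h = hh L TYPE('m)"

lemma h_pos: "0 < h"
  using hh_pos[OF L_pos] by (simp add: h_def)

lemma inner_h_eq_h: "inner_h L u v = h * inner u v"
  for u v :: "'m grid"
  by (simp add: inner_h_eq h_def)

definition normq_pow :: "'m grid \<Rightarrow> real" where
  "normq_pow v = h * (\<Sum>j\<in>UNIV. \<bar>v $ j\<bar> powr (p + 1))"

lemma normq_pow_nonneg: "0 \<le> normq_pow v"
  using h_pos by (simp add: normq_pow_def sum_nonneg)

lemma normq_h_eq_1_iff: "normq_h L (p + 1) v = 1 \<longleftrightarrow> normq_pow v = 1"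
proof -
  have "normq_h L (p + 1) v = normq_pow v powr (1 / (p + 1))"
    by (simp add: normq_h_def normq_pow_def h_def)
  moreover have "normq_pow v = (normq_pow v powr (1 / (p + 1))) powr (p + 1)"
    using normq_pow_nonneg[of v] p_gt_1 by (simp add: powr_powr)
  ultimately show ?thesis
    by (metis powr_one_eq_one)
qed

lemma normq_pow_us: "normq_pow us = 1"
  using us_unit normq_h_eq_1_iff by blast

lemma inner_h_powu_self: "inner_h L (powu p v) v = normq_pow v"
  by (simp add: inner_h_def normq_pow_def powu_def abs_powr_mult_self h_def)

lemma has_derivative_normq_pow:
  "(normq_pow has_derivative (\<lambda>k. (p + 1) * inner_h L (powu p v) k)) (at v within S)"
proof -
  have "((\<lambda>x. \<Sum>j\<in>UNIV. \<bar>x $ j\<bar> powr (p + 1)) has_derivative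
      (\<lambda>k. \<Sum>j\<in>UNIV. k $ j * ((p + 1) * (\<bar>v $ j\<bar> powr (p - 1) * v $ j)))) (at v within S)"
    using p_gt_1
    by (intro has_derivative_sum DERIV_compose_FDERIV[OF has_real_derivative_abs_powr]
        bounded_linear_imp_has_derivative bounded_linear_vec_nth) simp
  then have "(normq_pow has_derivative
      (\<lambda>k. h * (\<Sum>j\<in>UNIV. k $ j * ((p + 1) * (\<bar>v $ j\<bar> powr (p - 1) * v $ j))))) (at v within S)"
    unfolding normq_pow_def[abs_def] by (rule has_derivative_mult_right)
  then show ?thesis
    by (simp add: inner_h_def powu_def sum_distrib_left mult_ac h_def)
qed

lemma isCont_normq_pow: "isCont normq_pow v"
  using has_derivative_continuous[OF has_derivative_normq_pow[of v UNIV]] by simp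

lemma normq_pow_scaleR: "0 \<le> c \<Longrightarrow> normq_pow (c *\<^sub>R v) = c powr (p + 1) * normq_pow v"
  by (simp add: normq_pow_def abs_mult powr_mult sum_distrib_left mult_ac)

lemma normq_pow_taylor:
  "\<exists>t. (\<forall>j. min (v $ j) (w $ j) \<le> t j \<and> t j \<le> max (v $ j) (w $ j)) \<and>
     normq_pow w = normq_pow v + (p + 1) * inner_h L (powu p v) (w - v)
       + (p + 1) * p / 2 * h * (\<Sum>j\<in>UNIV. \<bar>t j\<bar> powr (p - 1) * (w $ j - v $ j)\<^sup>2)"
proof -
  obtain t where t: "\<forall>j. min (v $ j) (w $ j) \<le> t j \<and> t j \<le> max (v $ j) (w $ j)"
    and taylor: "\<And>j. \<bar>w $ j\<bar> powr (p + 1) = \<bar>v $ j\<bar> powr (p + 1)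
      + (p + 1) * (\<bar>v $ j\<bar> powr (p - 1) * v $ j) * (w $ j - v $ j)
      + (p + 1) * p / 2 * \<bar>t j\<bar> powr (p - 1) * (w $ j - v $ j)\<^sup>2"
    using abs_powr_taylor[OF p_gt_1, of "v $ j" "w $ j" for j] by metis
  have "normq_pow w = h * ((\<Sum>j\<in>UNIV. \<bar>v $ j\<bar> powr (p + 1))
      + (p + 1) * (\<Sum>j\<in>UNIV. (\<bar>v $ j\<bar> powr (p - 1) * v $ j) * (w $ j - v $ j))
      + (p + 1) * p / 2 * (\<Sum>j\<in>UNIV. \<bar>t j\<bar> powr (p - 1) * (w $ j - v $ j)\<^sup>2))"
    unfolding normq_pow_def taylor by (simp only: sum.distrib sum_distrib_left mult.assoc)
  also have "\<dots> = normq_pow v + (p + 1) * inner_h L (powu p v) (w - v)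
      + (p + 1) * p / 2 * h * (\<Sum>j\<in>UNIV. \<bar>t j\<bar> powr (p - 1) * (w $ j - v $ j)\<^sup>2)"
    by (simp add: normq_pow_def inner_h_eq_h inner_vec_def powu_def distrib_left mult_ac)
  finally show ?thesis
    using t by blast
qed

lemma normq_pow_ge_tangent: "normq_pow v + (p + 1) * inner_h L (powu p v) (w - v) \<le> normq_pow w"
proof -
  obtain t where "normq_pow w = normq_pow v + (p + 1) * inner_h L (powu p v) (w - v)
      + (p + 1) * p / 2 * h * (\<Sum>j\<in>UNIV. \<bar>t j\<bar> powr (p - 1) * (w $ j - v $ j)\<^sup>2)"
    using normq_pow_taylor by blast
  moreover have "0 \<le> (p + 1) * p / 2 * h * (\<Sum>j\<in>UNIV. \<bar>t j\<bar> powr (p - 1) * (w $ j - v $ j)\<^sup>2)"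
    using p_gt_1 h_pos by (intro mult_nonneg_nonneg sum_nonneg) auto
  ultimately show ?thesis
    by linarith
qed

lemma normq_pow_le_tangent:
  assumes "norm v \<le> R" "norm w \<le> R"
  shows "normq_pow w \<le> normq_pow v + (p + 1) * inner_h L (powu p v) (w - v)
    + (p + 1) * p / 2 * h * R powr (p - 1) * (norm (w - v))\<^sup>2"
proof -
  obtain t where t: "\<forall>j. min (v $ j) (w $ j) \<le> t j \<and> t j \<le> max (v $ j) (w $ j)"
    and eq: "normq_pow w = normq_pow v + (p + 1) * inner_h L (powu p v) (w - v)
      + (p + 1) * p / 2 * h * (\<Sum>j\<in>UNIV. \<bar>t j\<bar> powr (p - 1) * (w $ j - v $ j)\<^sup>2)"
    using normq_pow_taylor by blast
  have "\<bar>t j\<bar> \<le> R" for j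
    using t[rule_format, of j] assms component_le_norm_cart[of v j] component_le_norm_cart[of w j]
    by (auto simp: abs_le_iff min_def max_def split: if_splits)
  then have "(\<Sum>j\<in>UNIV. \<bar>t j\<bar> powr (p - 1) * (w $ j - v $ j)\<^sup>2)
      \<le> (\<Sum>j\<in>UNIV. R powr (p - 1) * (w $ j - v $ j)\<^sup>2)"
    using p_gt_1 by (intro sum_mono mult_right_mono powr_mono2) auto
  also have "\<dots> = R powr (p - 1) * (norm (w - v))\<^sup>2"
    by (simp add: power2_norm_vec sum_distrib_left)
  finally have "(p + 1) * p / 2 * h * (\<Sum>j\<in>UNIV. \<bar>t j\<bar> powr (p - 1) * (w $ j - v $ j)\<^sup>2)
      \<le> (p + 1) * p / 2 * h * (R powr (p - 1) * (norm (w - v))\<^sup>2)"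
    using p_gt_1 h_pos by (intro mult_left_mono) auto
  then show ?thesis
    using eq by (simp add: mult.assoc)
qed

lemma inner_h_powu_us_us: "inner_h L (powu p us) us = 1"
  using inner_h_powu_self normq_pow_us by simp

lemma normal_coordinate:
  assumes "\<xi> \<in> tangent_h L p us"
  shows "inner_h L (powu p us) (s *\<^sub>R us + \<xi>) = s"
  using assms inner_h_powu_us_us h_pos
  by (simp add: tangent_h_def inner_h_eq_h inner_add_right distrib_left mult.left_commute)

lemma tangent_part_in_tangent: "e - inner_h L (powu p us) e *\<^sub>R us \<in> tangent_h L p us"
  using inner_h_powu_us_us by (simp add: tangent_h_def inner_h_eq_h inner_diff_right)

(* R0 bounds every point used below: u with norm (u - us) <= 1, and (1 + s) us + x with
   |s|, norm x <= 1/2. *)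
definition R0 :: real where "R0 = 2 * norm us + 1"

definition kappa :: real where "kappa = p / 2 * h * R0 powr (p - 1)"

lemma kappa_nonneg: "0 \<le> kappa"
  using p_gt_1 h_pos by (simp add: kappa_def)

lemma normal_coordinate_bound:
  assumes "normq_pow u = 1" "norm u \<le> R0"
  shows "\<bar>inner_h L (powu p us) (u - us)\<bar> \<le> kappa * (norm (u - us))\<^sup>2"
proof -
  let ?s = "inner_h L (powu p us) (u - us)"
  have "?s \<le> 0"
    using normq_pow_ge_tangent[of us u] assms(1) normq_pow_us p_gt_1
    by (simp add: mult_le_0_iff)
  moreover have "norm us \<le> R0"
    by (simp add: R0_def)
  then have "0 \<le> (p + 1) * (?s + kappa * (norm (u - us))\<^sup>2)"
    using normq_pow_le_tangent[OF _ assms(2), of us] assms(1) normq_pow_us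
    by (simp add: kappa_def algebra_simps)
  then have "- ?s \<le> kappa * (norm (u - us))\<^sup>2"
    using p_gt_1 by (simp add: zero_le_mult_iff)
  ultimately show ?thesis
    by simp
qed

definition sphere_defect :: "'m grid \<Rightarrow> real \<Rightarrow> real" where
  "sphere_defect x s = normq_pow ((1 + s) *\<^sub>R us + x) - 1"

lemma sphere_defect_supporting_line:
  "sphere_defect x s + (p + 1) * inner_h L (powu p ((1 + s) *\<^sub>R us + x)) us * (t - s)
    \<le> sphere_defect x t"
proof -
  have "(1 + t) *\<^sub>R us + x - ((1 + s) *\<^sub>R us + x) = (t - s) *\<^sub>R us"
    by (simp add: algebra_simps)
  then show ?thesis
    using normq_pow_ge_tangent[of "(1 + s) *\<^sub>R us + x" "(1 + t) *\<^sub>R us + x"]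
    by (simp add: sphere_defect_def inner_h_eq_h mult_ac)
qed

lemma isCont_sphere_defect_left: "isCont (\<lambda>x. sphere_defect x s) x"
  unfolding sphere_defect_def
  by (intro continuous_intros continuous_at_compose[OF _ isCont_normq_pow, unfolded o_def])

lemma isCont_sphere_defect_right: "isCont (sphere_defect x) s"
  unfolding sphere_defect_def
  by (intro continuous_intros continuous_at_compose[OF _ isCont_normq_pow, unfolded o_def])

lemma has_derivative_sphere_defect:
  "((\<lambda>z. sphere_defect (fst z) (snd z)) has_derivative
     (\<lambda>z. (p + 1) * h * inner (powu p ((1 + s) *\<^sub>R us + x)) (fst z)
        + (p + 1) * h * inner (powu p ((1 + s) *\<^sub>R us + x)) us * snd z)) (at (x, s))"
proof -
  have "((\<lambda>z. (1 + snd z) *\<^sub>R us + fst z) has_derivative (\<lambda>z. snd z *\<^sub>R us + fst z)) (at (x, s))"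
    by (auto intro!: derivative_eq_intros)
  from has_derivative_compose[OF this has_derivative_normq_pow]
  have "((\<lambda>z. normq_pow ((1 + snd z) *\<^sub>R us + fst z)) has_derivative
      (\<lambda>z. (p + 1) * inner_h L (powu p ((1 + s) *\<^sub>R us + x)) (snd z *\<^sub>R us + fst z))) (at (x, s))"
    by simp
  then show ?thesis
    unfolding sphere_defect_def
    by (auto intro!: derivative_eq_intros simp: inner_h_eq_h inner_add_right algebra_simps)
qed

lemma sphere_defect_0: "-1 < s \<Longrightarrow> sphere_defect 0 s = (1 + s) powr (p + 1) - 1"
  by (simp add: sphere_defect_def normq_pow_scaleR normq_pow_us)

(* The second bound lets r_quadratic absorb the term quadratic in s. *)
definition eps :: real where "eps = min (1 / 2) (1 / (4 * kappa * (norm us)\<^sup>2 + 1))"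

lemma eps_pos: "0 < eps" and eps_le_half: "eps \<le> 1 / 2"
  using kappa_nonneg by (simp_all add: eps_def add_nonneg_pos)

lemma eps_kappa: "4 * kappa * (norm us)\<^sup>2 * eps \<le> 1"
proof -
  have "0 < 4 * kappa * (norm us)\<^sup>2 + 1"
    using kappa_nonneg by (simp add: add_nonneg_pos)
  moreover have "eps \<le> 1 / (4 * kappa * (norm us)\<^sup>2 + 1)"
    by (simp add: eps_def)
  ultimately have "eps * (4 * kappa * (norm us)\<^sup>2 + 1) \<le> 1"
    by (simp add: le_divide_eq)
  then show ?thesis
    using eps_pos by (simp add: algebra_simps)
qed

(* On W the convex function sphere_defect x changes sign on [-eps, eps], so it has exactly one
   zero there. *)
definition W :: "'m grid set" where
  "W = {x. norm x < 1 / 2 \<and> 0 < sphere_defect x eps \<and> sphere_defect x (- eps) < 0}"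

lemma open_W: "open W"
  unfolding W_def
  by (intro open_Collect_conj open_Collect_less continuous_intros continuous_at_imp_continuous_on
      ballI isCont_sphere_defect_left)

lemma zero_in_W: "0 \<in> W"
proof -
  have "1 < (1 + eps) powr (p + 1)"
    using eps_pos p_gt_1 by simp
  moreover have "(1 - eps) powr (p + 1) < 1 powr (p + 1)"
    using eps_pos eps_le_half p_gt_1 by (intro powr_less_mono2) auto
  ultimately show ?thesis
    using eps_pos eps_le_half by (simp add: W_def sphere_defect_0)
qed

lemma sphere_defect_sign_change:
  assumes "x \<in> W" "- eps \<le> a" "sphere_defect x a < 0" "a < z" "sphere_defect x z = 0"
  shows "0 < inner_h L (powu p ((1 + z) *\<^sub>R us + x)) us"
    and "\<And>t. z < t \<Longrightarrow> 0 < sphere_defect x t"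
    and "\<And>t. a \<le> t \<Longrightarrow> t < z \<Longrightarrow> sphere_defect x t < 0"
  using supporting_line_zero_crossing[where f = "sphere_defect x", OF sphere_defect_supporting_line
      assms(3-5)] p_gt_1 by (simp_all add: zero_less_mult_iff)

lemma sphere_defect_root_between:
  assumes "sphere_defect x a < 0" "0 < sphere_defect x b" "a < b"
  shows "\<exists>s. a < s \<and> s < b \<and> sphere_defect x s = 0"
proof -
  obtain s where "a \<le> s" "s \<le> b" "sphere_defect x s = 0"
    using IVT[of "sphere_defect x" a 0 b] assms isCont_sphere_defect_right by force
  with assms show ?thesis
    by (metis order.order_iff_strict less_irrefl)
qed

lemma sphere_defect_root_unique:
  assumes "x \<in> W" "\<bar>s\<bar> < eps" "\<bar>t\<bar> < eps" "sphere_defect x s = 0" "sphere_defect x t = 0"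
  shows "s = t"
proof -
  have neg: "sphere_defect x (- eps) < 0"
    using assms(1) by (simp add: W_def)
  have "\<not> s < t" if "\<bar>s\<bar> < eps" "sphere_defect x s = 0" "sphere_defect x t = 0" for s t
    using sphere_defect_sign_change(2)[OF assms(1) order_refl neg _ that(2), of t] that
    by (auto simp: abs_less_iff)
  with assms show ?thesis
    by (metis linorder_neqE_linordered_idom)
qed

(* Meaningful only on W, where the zero exists and is unique. *)
definition r :: "'m grid \<Rightarrow> real" where
  "r x = (THE s. \<bar>s\<bar> < eps \<and> sphere_defect x s = 0)"

lemma r_root:
  assumes "x \<in> W"
  shows "\<bar>r x\<bar> < eps" and "sphere_defect x (r x) = 0"
proof -
  obtain s where "- eps < s" "s < eps" "sphere_defect x s = 0"
    using sphere_defect_root_between[of x "- eps" eps] assms eps_pos by (auto simp: W_def)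
  then have s: "\<bar>s\<bar> < eps \<and> sphere_defect x s = 0"
    by auto
  have "\<bar>r x\<bar> < eps \<and> sphere_defect x (r x) = 0"
    unfolding r_def
    by (rule theI[where P = "\<lambda>s. \<bar>s\<bar> < eps \<and> sphere_defect x s = 0", OF s])
      (use s sphere_defect_root_unique[OF assms] in auto)
  then show "\<bar>r x\<bar> < eps" "sphere_defect x (r x) = 0"
    by auto
qed

lemma r_unique: "x \<in> W \<Longrightarrow> \<bar>s\<bar> < eps \<Longrightarrow> sphere_defect x s = 0 \<longleftrightarrow> s = r x"
  using r_root sphere_defect_root_unique by blast

lemma r_0: "r 0 = 0"
  using r_unique[OF zero_in_W, of 0] eps_pos by (simp add: sphere_defect_0)

lemma normq_h_eq_1_iff_r:
  "x \<in> W \<Longrightarrow> \<bar>s\<bar> < eps \<Longrightarrow> normq_h L (p + 1) ((1 + s) *\<^sub>R us + x) = 1 \<longleftrightarrow> s = r x"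
  using r_unique by (simp add: normq_h_eq_1_iff sphere_defect_def)

lemma isCont_r:
  assumes x: "x \<in> W"
  shows "isCont r x"
  unfolding isCont_def tendsto_iff
proof (intro allI impI)
  fix e :: real
  assume "0 < e"
  define \<eta> where "\<eta> = min e (eps - \<bar>r x\<bar>) / 2"
  have "0 < \<eta>" "2 * \<eta> \<le> e" "2 * \<eta> \<le> eps - \<bar>r x\<bar>"
    using \<open>0 < e\<close> r_root(1)[OF x] by (auto simp: \<eta>_def)
  then have \<eta>: "0 < \<eta>" "\<eta> < e" "- eps \<le> r x - \<eta>" "r x + \<eta> < eps"
    using \<open>0 < e\<close> r_root(1)[OF x] abs_ge_self[of "r x"] abs_ge_minus_self[of "r x"]
    by - (linarith+)
  have "sphere_defect x (- eps) < 0" "- eps < r x"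
    using x r_root(1)[OF x] by (auto simp: W_def)
  note crossing = sphere_defect_sign_change[OF x order_refl this(1) this(2) r_root(2)[OF x]]
  have "\<forall>\<^sub>F y in at x. y \<in> W \<and> sphere_defect y (r x - \<eta>) < 0 \<and> 0 < sphere_defect y (r x + \<eta>)"
    using eventually_at_in_open'[OF open_W x]
      order_tendstoD(2)[OF isCont_sphere_defect_left[of x "r x - \<eta>", unfolded isCont_def]]
      order_tendstoD(1)[OF isCont_sphere_defect_left[of x "r x + \<eta>", unfolded isCont_def]]
      crossing(2,3) \<eta> by (simp add: eventually_conj_iff)
  then show "\<forall>\<^sub>F y in at x. dist (r y) (r x) < e"
  proof eventually_elim
    case (elim y)
    then obtain s where s: "r x - \<eta> < s" "s < r x + \<eta>" "sphere_defect y s = 0"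
      using sphere_defect_root_between[of y "r x - \<eta>" "r x + \<eta>"] \<eta>(1) by auto
    moreover have "\<bar>s\<bar> < eps"
      using s \<eta>(3,4) by auto
    ultimately have "s = r y"
      using r_unique elim by blast
    with s \<eta>(2) show ?case
      by (simp add: dist_real_def abs_less_iff)
  qed
qed

lemma continuous_on_r: "continuous_on W r"
  using isCont_r by (simp add: continuous_at_imp_continuous_on)

definition normal_at :: "'m grid \<Rightarrow> 'm grid" where
  "normal_at x = powu p ((1 + r x) *\<^sub>R us + x)"

definition r_grad :: "'m grid \<Rightarrow> 'm grid" where
  "r_grad x = - (1 / inner (normal_at x) us) *\<^sub>R normal_at x"

lemma inner_normal_at_pos:
  assumes "x \<in> W"
  shows "0 < inner (normal_at x) us"
proof -
  have "0 < inner_h L (powu p ((1 + r x) *\<^sub>R us + x)) us"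
    using sphere_defect_sign_change(1)[OF assms order_refl _ _ r_root(2)[OF assms]]
      r_root(1)[OF assms] assms by (auto simp: W_def)
  then show ?thesis
    using h_pos by (simp add: normal_at_def inner_h_eq_h zero_less_mult_iff)
qed

lemma has_derivative_r:
  assumes x: "x \<in> W"
  shows "(r has_derivative (\<lambda>k. inner (r_grad x) k)) (at x)"
proof -
  let ?b = "(p + 1) * h * inner (normal_at x) us"
  have "(r has_derivative (\<lambda>k. - ((p + 1) * h * inner (normal_at x) k) / ?b)) (at x)"
  proof (rule implicit_function_has_derivative[where H = "\<lambda>z. sphere_defect (fst z) (snd z)"])
    show "((\<lambda>z. sphere_defect (fst z) (snd z)) has_derivative
        (\<lambda>z. (p + 1) * h * inner (normal_at x) (fst z) + ?b * snd z)) (at (x, r x))"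
      using has_derivative_sphere_defect by (simp add: normal_at_def)
    show "bounded_linear (\<lambda>k. (p + 1) * h * inner (normal_at x) k)"
      by (intro bounded_linear_intros)
    show "?b \<noteq> 0"
      using inner_normal_at_pos[OF x] h_pos p_gt_1 by simp
    show "isCont r x"
      using isCont_r[OF x] .
    show "\<forall>\<^sub>F y in nhds x. sphere_defect (fst (y, r y)) (snd (y, r y)) = 0"
      using eventually_nhds_in_open[OF open_W x] by eventually_elim (simp add: r_root)
  qed
  moreover have "- ((p + 1) * h * inner (normal_at x) k) / ?b = inner (r_grad x) k" for k
    using h_pos p_gt_1 by (simp add: r_grad_def)
  ultimately show ?thesis
    by simp
qed

definition normal_at' :: "'m grid \<Rightarrow> 'm grid \<Rightarrow> 'm grid" where
  "normal_at' x k = (\<chi> j. (inner (r_grad x) k * us $ j + k $ j)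
      * (p * \<bar>((1 + r x) *\<^sub>R us + x) $ j\<bar> powr (p - 1)))"

lemma has_derivative_normal_at:
  assumes x: "x \<in> W"
  shows "(normal_at has_derivative normal_at' x) (at x)"
proof -
  have "((\<lambda>x. (1 + r x) *\<^sub>R us + x) has_derivative (\<lambda>k. inner (r_grad x) k *\<^sub>R us + k)) (at x)"
    using has_derivative_r[OF x] by (auto intro!: derivative_eq_intros)
  from has_derivative_compose[OF this has_derivative_powu[OF p_gt_1]]
  show ?thesis
    by (simp add: normal_at_def[abs_def] normal_at'_def[abs_def])
qed

definition r_grad' :: "'m grid \<Rightarrow> 'm grid \<Rightarrow> 'm grid" where
  "r_grad' x k = (inner (normal_at' x k) us / (inner (normal_at x) us)\<^sup>2) *\<^sub>R normal_at x
    - (1 / inner (normal_at x) us) *\<^sub>R normal_at' x k"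

lemma has_derivative_r_grad:
  assumes x: "x \<in> W"
  shows "(r_grad has_derivative r_grad' x) (at x)"
  unfolding r_grad_def[abs_def]
  using inner_normal_at_pos[OF x]
  by (auto intro!: derivative_eq_intros has_derivative_normal_at[OF x]
      simp: r_grad'_def fun_eq_iff power2_eq_square algebra_simps)

lemma continuous_on_normal_at: "continuous_on W normal_at"
  unfolding normal_at_def[abs_def]
  by (intro continuous_on_compose2[OF continuous_on_powu[OF p_gt_1, of UNIV]] continuous_intros
      continuous_on_r) auto

lemma continuous_on_r_grad': "continuous_on W (\<lambda>x. r_grad' x k)"
proof -
  have B: "continuous_on W (\<lambda>x. inner (normal_at x) us)"
    by (intro continuous_intros continuous_on_normal_at)
  have r_grad: "continuous_on W r_grad"
    unfolding r_grad_def[abs_def]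
    by (intro continuous_intros continuous_on_normal_at B) (auto dest: inner_normal_at_pos)
  have weight: "continuous_on W (\<lambda>x. \<bar>((1 + r x) *\<^sub>R us + x) $ j\<bar> powr (p - 1))" for j
    by (intro continuous_on_compose2[OF continuous_on_abs_powr[of "p - 1" UNIV]] continuous_intros
        continuous_on_r) (use p_gt_1 in auto)
  have "continuous_on W (\<lambda>x. (inner (r_grad x) k * us $ j + k $ j)
      * (p * \<bar>((1 + r x) *\<^sub>R us + x) $ j\<bar> powr (p - 1)))" for j
    by (rule continuous_on_mult[OF _ continuous_on_mult[OF continuous_on_const weight]])
      (intro continuous_intros r_grad)
  then have "continuous_on W (\<lambda>x. normal_at' x k)"
    unfolding normal_at'_def by (rule continuous_on_vec_lambda)
  then show ?thesis
    unfolding r_grad'_def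
    by (intro continuous_intros continuous_on_normal_at B) (auto dest: inner_normal_at_pos)
qed

lemma C2_on_r: "C2_on W r"
  by (rule C2_on_gradientI[OF has_derivative_r has_derivative_r_grad continuous_on_r_grad'])

lemma r_quadratic:
  assumes x: "x \<in> W" and tangent: "x \<in> tangent_h L p us"
  shows "\<bar>r x\<bar> \<le> 4 * kappa * (norm x)\<^sup>2"
proof -
  let ?s = "r x"
  let ?w = "(1 + ?s) *\<^sub>R us + x"
  have s: "\<bar>?s\<bar> < eps"
    using r_root(1)[OF x] .
  have "norm x < 1 / 2"
    using x by (simp add: W_def)
  moreover have "\<bar>1 + ?s\<bar> \<le> 3 / 2"
    using s eps_le_half by linarith
  ultimately have "norm ?w \<le> R0"
    using norm_triangle_ineq[of "(1 + ?s) *\<^sub>R us" x]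
      mult_right_mono[of "\<bar>1 + ?s\<bar>" "3 / 2" "norm us"]
    by (simp add: R0_def) (smt (verit) norm_ge_zero)
  moreover have "normq_pow ?w = 1"
    using r_root(2)[OF x] by (simp add: sphere_defect_def)
  ultimately have "\<bar>inner_h L (powu p us) (?w - us)\<bar> \<le> kappa * (norm (?w - us))\<^sup>2"
    by (rule normal_coordinate_bound[rotated])
  moreover have "?w - us = ?s *\<^sub>R us + x"
    by (simp add: algebra_simps)
  ultimately have "\<bar>?s\<bar> \<le> kappa * (norm (?s *\<^sub>R us + x))\<^sup>2"
    using normal_coordinate[OF tangent] by simp
  also have "\<dots> \<le> kappa * (2 * (?s\<^sup>2 * (norm us)\<^sup>2) + 2 * (norm x)\<^sup>2)"
    using power2_norm_add_le[of "?s *\<^sub>R us" x] kappa_nonneg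
    by (intro mult_left_mono) (simp_all add: power_mult_distrib)
  also have "\<dots> \<le> \<bar>?s\<bar> / 2 + 2 * kappa * (norm x)\<^sup>2"
  proof -
    have "kappa * (2 * (?s\<^sup>2 * (norm us)\<^sup>2)) = (2 * kappa * (norm us)\<^sup>2 * \<bar>?s\<bar>) * \<bar>?s\<bar>"
      by (simp add: power2_eq_square abs_mult_self_eq mult_ac)
    also have "\<dots> \<le> (2 * kappa * (norm us)\<^sup>2 * eps) * \<bar>?s\<bar>"
      using s kappa_nonneg by (intro mult_right_mono mult_left_mono) auto
    also have "\<dots> \<le> 1 / 2 * \<bar>?s\<bar>"
      using eps_kappa by (intro mult_right_mono) auto
    finally show ?thesis
      by (simp add: algebra_simps)
  qed
  finally show ?thesis
    by simp
qed

lemma r_le_normq_h_sq: "\<exists>C. \<forall>\<xi>\<in>tangent_h L p us \<inter> W. \<bar>r \<xi>\<bar> \<le> C * (normq_h L (p + 1) \<xi>)\<^sup>2"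
proof -
  let ?c = "CARD('m bit0) / hh L TYPE('m) powr (1 / (p + 1))"
  have "\<bar>r \<xi>\<bar> \<le> 4 * kappa * ?c\<^sup>2 * (normq_h L (p + 1) \<xi>)\<^sup>2" if "\<xi> \<in> tangent_h L p us \<inter> W" for \<xi>
  proof -
    have "(norm \<xi>)\<^sup>2 \<le> (?c * normq_h L (p + 1) \<xi>)\<^sup>2"
      using norm_le_normq_h[OF L_pos, of "p + 1" \<xi>] p_gt_1 by (intro power_mono) auto
    then have "4 * kappa * (norm \<xi>)\<^sup>2 \<le> 4 * kappa * (?c\<^sup>2 * (normq_h L (p + 1) \<xi>)\<^sup>2)"
      using kappa_nonneg by (intro mult_left_mono) (simp_all only: power_mult_distrib)
    with r_quadratic[of \<xi>] that show ?thesis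
      by (simp add: mult.assoc)
  qed
  then show ?thesis
    by blast
qed

lemma norm_le_norm1_h: "norm e \<le> norm1_h x0 L e / sqrt h"
  for e :: "'m grid"
proof -
  have "sqrt h * norm e = sqrt (h * (norm e)\<^sup>2)"
    using h_pos by (simp add: real_sqrt_mult)
  also have "\<dots> \<le> sqrt ((norm1_h x0 L e)\<^sup>2)"
    using norm1_h_lower[OF L_pos, of e x0] by (intro real_sqrt_le_mono) (simp add: h_def)
  also have "\<dots> = norm1_h x0 L e"
    using norm1_h_nonneg[OF L_pos, of x0 e] by simp
  finally show ?thesis
    using h_pos by (simp add: le_divide_eq mult.commute)
qed

lemma U_h_subset_ball:
  assumes "0 < d"
  shows "U_h x0 L (sqrt h * d / 2) us \<subseteq> {u. norm (u - us) < d}"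
proof
  fix u
  assume "u \<in> U_h x0 L (sqrt h * d / 2) us"
  then have "norm1_h x0 L (u - us) / sqrt h \<le> d / 2"
    using h_pos by (simp add: U_h_def pos_divide_le_eq mult.commute)
  then have "norm (u - us) \<le> d / 2"
    by (rule order_trans[OF norm_le_norm1_h])
  then show "u \<in> {u. norm (u - us) < d}"
    using assms by simp
qed

lemma tangent_decomposition_bound:
  "\<exists>C>0. \<forall>s \<xi>. \<xi> \<in> tangent_h L p us \<longrightarrow>
     \<bar>s\<bar> \<le> C * norm (s *\<^sub>R us + \<xi>) \<and> norm \<xi> \<le> C * norm (s *\<^sub>R us + \<xi>)"
proof -
  define a where "a = h * norm (powu p us)"
  have a: "0 \<le> a"
    using h_pos by (simp add: a_def)
  have "\<bar>s\<bar> \<le> (1 + a * (1 + norm us)) * norm (s *\<^sub>R us + \<xi>)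
      \<and> norm \<xi> \<le> (1 + a * (1 + norm us)) * norm (s *\<^sub>R us + \<xi>)"
    if "\<xi> \<in> tangent_h L p us" for s \<xi>
  proof -
    let ?e = "s *\<^sub>R us + \<xi>"
    have "s = h * inner (powu p us) ?e"
      using normal_coordinate[OF that] by (simp add: inner_h_eq_h)
    then have "\<bar>s\<bar> = h * \<bar>inner (powu p us) ?e\<bar>"
      using h_pos by (metis abs_mult abs_of_pos)
    also have "\<dots> \<le> a * norm ?e"
      using Cauchy_Schwarz_ineq2[of "powu p us" ?e] h_pos
      by (simp add: a_def mult.assoc mult_left_mono)
    finally have s: "\<bar>s\<bar> \<le> a * norm ?e" .
    have "norm \<xi> \<le> norm ?e + \<bar>s\<bar> * norm us"
      using norm_triangle_ineq4[of ?e "s *\<^sub>R us"] by simp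
    also have "\<dots> \<le> norm ?e + a * norm ?e * norm us"
      using s by (simp add: mult_right_mono)
    finally have "norm \<xi> \<le> (1 + a * norm us) * norm ?e"
      by (simp add: algebra_simps)
    moreover have "(1 + a * norm us) * norm ?e \<le> (1 + a * (1 + norm us)) * norm ?e"
      using a by (intro mult_right_mono) (auto simp: algebra_simps)
    moreover have "a * norm ?e \<le> (1 + a * (1 + norm us)) * norm ?e"
      using a by (intro mult_right_mono) (auto simp: algebra_simps)
    ultimately show ?thesis
      using s by linarith
  qed
  moreover have "0 < 1 + a * (1 + norm us)"
    using a by (simp add: add_pos_nonneg)
  ultimately show ?thesis
    by blast
qed

lemma near_decomposition_in_W:
  "\<exists>\<delta>>0. \<forall>u \<in> U_h x0 L \<delta> us. \<forall>s. \<forall>\<xi>\<in>tangent_h L p us.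
     u = (1 + s) *\<^sub>R us + \<xi> \<longrightarrow> \<xi> \<in> W \<and> \<bar>s\<bar> < eps"
proof -
  obtain \<rho> where \<rho>: "0 < \<rho>" "ball 0 \<rho> \<subseteq> W"
    using open_W zero_in_W open_contains_ball by blast
  obtain C where C: "0 < C" "\<And>s \<xi>. \<xi> \<in> tangent_h L p us \<Longrightarrow>
      \<bar>s\<bar> \<le> C * norm (s *\<^sub>R us + \<xi>) \<and> norm \<xi> \<le> C * norm (s *\<^sub>R us + \<xi>)"
    using tangent_decomposition_bound by blast
  define d where "d = min eps \<rho> / C"
  have "0 < d"
    using C(1) eps_pos \<rho>(1) by (simp add: d_def)
  have "\<xi> \<in> W \<and> \<bar>s\<bar> < eps" if "u \<in> U_h x0 L (sqrt h * d / 2) us"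
    and "\<xi> \<in> tangent_h L p us" "u = (1 + s) *\<^sub>R us + \<xi>" for u s \<xi>
  proof -
    have "norm (u - us) < d"
      using U_h_subset_ball[OF \<open>0 < d\<close>, of x0] that(1) by blast
    have "u - us = s *\<^sub>R us + \<xi>"
      using that(3) by (simp add: algebra_simps)
    then have "C * norm (s *\<^sub>R us + \<xi>) < min eps \<rho>"
      using \<open>norm (u - us) < d\<close> C(1) by (simp add: d_def pos_less_divide_eq mult.commute)
    with C(2)[OF that(2), of s] \<rho>(2) show ?thesis
      by (auto simp: subset_eq)
  qed
  moreover have "0 < sqrt h * d / 2"
    using \<open>0 < d\<close> h_pos by simp
  ultimately show ?thesis
    by blast
qed

lemma implicit_normalisation:
  "\<exists>\<delta>>0. \<exists>W \<epsilon> C. \<exists>r :: 'm grid \<Rightarrow> real.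
     open W \<and> 0 \<in> W \<and> \<epsilon> > 0 \<and> C2_on W r \<and> r 0 = 0 \<and>
     (\<forall>\<xi>\<in>tangent_h L p us \<inter> W. \<bar>r \<xi>\<bar> < \<epsilon> \<and>
         (\<forall>s. \<bar>s\<bar> < \<epsilon> \<longrightarrow> (normq_h L (p + 1) ((1 + s) *\<^sub>R us + \<xi>) = 1 \<longleftrightarrow> s = r \<xi>))) \<and>
     (\<forall>u \<in> U_h x0 L \<delta> us. \<forall>s. \<forall>\<xi>\<in>tangent_h L p us.
         u = (1 + s) *\<^sub>R us + \<xi> \<longrightarrow> \<xi> \<in> W \<and> \<bar>s\<bar> < \<epsilon>) \<and>
     (\<forall>\<xi>\<in>tangent_h L p us \<inter> W. \<bar>r \<xi>\<bar> \<le> C * (normq_h L (p + 1) \<xi>)\<^sup>2) \<and>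
     (\<forall>\<xi>\<in>tangent_h L p us. (normq_h L (p + 1) \<xi>)\<^sup>2 \<le> C * (norm1_h x0 L \<xi>)\<^sup>2)"
proof -
  obtain \<delta> where "0 < \<delta>" and near: "\<forall>u \<in> U_h x0 L \<delta> us. \<forall>s. \<forall>\<xi>\<in>tangent_h L p us.
      u = (1 + s) *\<^sub>R us + \<xi> \<longrightarrow> \<xi> \<in> W \<and> \<bar>s\<bar> < eps"
    using near_decomposition_in_W by blast
  obtain C1 where C1: "\<forall>\<xi>\<in>tangent_h L p us \<inter> W. \<bar>r \<xi>\<bar> \<le> C1 * (normq_h L (p + 1) \<xi>)\<^sup>2"
    using r_le_normq_h_sq by blast
  obtain C2 where C2: "\<forall>\<xi> :: 'm grid. (normq_h L (p + 1) \<xi>)\<^sup>2 \<le> C2 * (norm1_h x0 L \<xi>)\<^sup>2"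
    using normq_h_sq_le_norm1_h_sq[OF L_pos, of "p + 1" x0] p_gt_1 by auto
  have "\<forall>\<xi>\<in>tangent_h L p us \<inter> W. \<bar>r \<xi>\<bar> \<le> max C1 C2 * (normq_h L (p + 1) \<xi>)\<^sup>2"
    using C1 by (meson max.cobounded1 mult_right_mono order_trans zero_le_power2)
  moreover have "\<forall>\<xi>\<in>tangent_h L p us. (normq_h L (p + 1) \<xi>)\<^sup>2 \<le> max C1 C2 * (norm1_h x0 L \<xi>)\<^sup>2"
    using C2 by (meson max.cobounded2 mult_right_mono order_trans zero_le_power2)
  moreover have "\<forall>\<xi>\<in>tangent_h L p us \<inter> W. \<bar>r \<xi>\<bar> < eps \<and>
      (\<forall>s. \<bar>s\<bar> < eps \<longrightarrow> (normq_h L (p + 1) ((1 + s) *\<^sub>R us + \<xi>) = 1 \<longleftrightarrow> s = r \<xi>))"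
    using r_root(1) normq_h_eq_1_iff_r by blast
  ultimately show ?thesis
    using \<open>0 < \<delta>\<close> near open_W zero_in_W eps_pos C2_on_r r_0 by blast
qed

end

section \<open>Quadratic growth of the energy\<close>

locale ground_state_multiplier = sphere_point L p us
  for L p :: real and us :: "'m::finite grid" +
  fixes x0 :: real and V :: "real \<Rightarrow> real" and \<omega> lams :: real
  assumes multiplier: "\<forall>j. A_h x0 L V \<omega> us $ j = lams * (\<bar>us $ j\<bar> powr (p - 1) * us $ j)"
begin

lemma A_h_us: "A_h x0 L V \<omega> us = lams *\<^sub>R powu p us"
  using multiplier by (simp add: vec_eq_iff powu_def)

definition lagrangian_hessian :: "'m grid \<Rightarrow> real" where
  "lagrangian_hessian \<xi> = 2 * (inner_h L (A_h x0 L V \<omega> \<xi>) \<xi>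
     - p * lams * inner_h L (\<chi> j. \<bar>us $ j\<bar> powr (p - 1) * \<xi> $ j) \<xi>)"

definition hessian_op :: "'m grid \<Rightarrow> 'm grid" where
  "hessian_op \<xi> = A_h x0 L V \<omega> \<xi> - (p * lams) *\<^sub>R (\<chi> j. \<bar>us $ j\<bar> powr (p - 1) * \<xi> $ j)"

lemma lagrangian_hessian_eq: "lagrangian_hessian \<xi> = 2 * h * inner (hessian_op \<xi>) \<xi>"
  by (simp add: lagrangian_hessian_def hessian_op_def inner_h_eq_h inner_diff_left algebra_simps)

lemma linear_hessian_op: "linear hessian_op"
  by (rule linearI)
    (simp_all add: hessian_op_def linear_add[OF linear_A_h] linear_scale[OF linear_A_h]
      vec_eq_iff algebra_simps)

lemma inner_hessian_op_commute: "inner (hessian_op \<xi>) \<eta> = inner \<xi> (hessian_op \<eta>)"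
  by (simp add: hessian_op_def inner_diff_left inner_diff_right inner_A_h_commute
      inner_diagonal_commute)

lemma hessian_op_us: "hessian_op us = ((1 - p) * lams) *\<^sub>R powu p us"
  by (simp add: hessian_op_def A_h_us powu_def vec_eq_iff algebra_simps)

lemma lagrangian_hessian_tangent_split:
  assumes "\<xi> \<in> tangent_h L p us"
  shows "lagrangian_hessian (s *\<^sub>R us + \<xi>) = 2 * (1 - p) * lams * s\<^sup>2 + lagrangian_hessian \<xi>"
proof -
  have "h * inner (powu p us) \<xi> = 0" "h * inner (powu p us) us = 1"
    using assms inner_h_powu_us_us by (simp_all add: tangent_h_def inner_h_eq_h)
  then have tangent: "inner (hessian_op (s *\<^sub>R us)) \<xi> = 0"
    and normal: "h * inner (hessian_op us) us = (1 - p) * lams"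
    using h_pos by (simp_all add: hessian_op_us linear_scale[OF linear_hessian_op])
  have "lagrangian_hessian (s *\<^sub>R us + \<xi>)
      = 2 * h * (inner (hessian_op (s *\<^sub>R us)) (s *\<^sub>R us) + inner (hessian_op \<xi>) \<xi>)"
    unfolding lagrangian_hessian_eq
      quadratic_form_add[OF linear_hessian_op inner_hessian_op_commute] tangent
    by simp
  also have "\<dots> = 2 * s\<^sup>2 * (h * inner (hessian_op us) us) + lagrangian_hessian \<xi>"
    by (simp add: linear_scale[OF linear_hessian_op] lagrangian_hessian_eq power2_eq_square
        algebra_simps)
  finally show ?thesis
    by (simp add: normal)
qed

lemma lagrangian_hessian_bound: "\<exists>C\<ge>0. \<forall>e. \<bar>lagrangian_hessian e\<bar> \<le> C * (norm e)\<^sup>2"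
proof -
  obtain K where K: "0 \<le> K" "\<And>e. \<bar>inner (hessian_op e) e\<bar> \<le> K * (norm e)\<^sup>2"
    using quadratic_form_bound[OF linear_hessian_op] by blast
  have "\<bar>lagrangian_hessian e\<bar> \<le> 2 * h * K * (norm e)\<^sup>2" for e
    using K(2)[of e] h_pos by (simp add: lagrangian_hessian_eq abs_mult mult.assoc)
  then show ?thesis
    using K(1) h_pos by (intro exI[of _ "2 * h * K"]) simp
qed

lemma energy_gap_taylor:
  assumes "normq_pow u = 1"
  shows "\<exists>t. (\<forall>j. min (us $ j) (u $ j) \<le> t j \<and> t j \<le> max (us $ j) (u $ j)) \<and>
    Q_h x0 L V \<omega> u - Q_h x0 L V \<omega> us = lagrangian_hessian (u - us) / 2
      - p * lams * h * (\<Sum>j\<in>UNIV. (\<bar>t j\<bar> powr (p - 1) - \<bar>us $ j\<bar> powr (p - 1)) * (u $ j - us $ j)\<^sup>2)"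
proof -
  let ?e = "u - us"
  obtain t where t: "\<forall>j. min (us $ j) (u $ j) \<le> t j \<and> t j \<le> max (us $ j) (u $ j)"
    and taylor: "normq_pow u = normq_pow us + (p + 1) * inner_h L (powu p us) ?e
      + (p + 1) * p / 2 * h * (\<Sum>j\<in>UNIV. \<bar>t j\<bar> powr (p - 1) * (u $ j - us $ j)\<^sup>2)"
    using normq_pow_taylor by blast
  have "(p + 1) * (inner_h L (powu p us) ?e
      + p / 2 * h * (\<Sum>j\<in>UNIV. \<bar>t j\<bar> powr (p - 1) * (u $ j - us $ j)\<^sup>2)) = 0"
    using taylor assms normq_pow_us by (simp add: algebra_simps)
  then have normal: "inner_h L (powu p us) ?e
      = - p / 2 * h * (\<Sum>j\<in>UNIV. \<bar>t j\<bar> powr (p - 1) * (u $ j - us $ j)\<^sup>2)"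
    using p_gt_1 by simp
  have "Q_h x0 L V \<omega> u = inner_h L (A_h x0 L V \<omega> (us + ?e)) (us + ?e)"
    by (simp add: Q_h_eq_inner_h)
  also have "\<dots> = h * (inner (A_h x0 L V \<omega> us) us + 2 * inner (A_h x0 L V \<omega> us) ?e
      + inner (A_h x0 L V \<omega> ?e) ?e)"
    by (simp only: inner_h_eq_h quadratic_form_add[OF linear_A_h inner_A_h_commute])
  also have "\<dots> = Q_h x0 L V \<omega> us + 2 * lams * inner_h L (powu p us) ?e + Q_h x0 L V \<omega> ?e"
    by (simp add: Q_h_eq_inner_h inner_h_eq_h A_h_us algebra_simps)
  finally have "Q_h x0 L V \<omega> u
      = Q_h x0 L V \<omega> us + 2 * lams * inner_h L (powu p us) ?e + Q_h x0 L V \<omega> ?e" .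
  moreover have "Q_h x0 L V \<omega> ?e = lagrangian_hessian ?e / 2
      + p * lams * h * (\<Sum>j\<in>UNIV. \<bar>us $ j\<bar> powr (p - 1) * (u $ j - us $ j)\<^sup>2)"
    by (simp add: lagrangian_hessian_def Q_h_eq_inner_h inner_h_eq_h inner_vec_def power2_eq_square
        mult_ac diff_divide_distrib)
  ultimately show ?thesis
    using t normal by (intro exI[of _ t]) (simp add: sum_subtractf algebra_simps)
qed

lemma abs_powr_near_us:
  assumes "0 < \<eta>"
  shows "\<exists>d>0. \<forall>u t. norm (u - us) < d \<longrightarrow>
    (\<forall>j. min (us $ j) (u $ j) \<le> t j \<and> t j \<le> max (us $ j) (u $ j)) \<longrightarrow>
    (\<forall>j. \<bar>\<bar>t j\<bar> powr (p - 1) - \<bar>us $ j\<bar> powr (p - 1)\<bar> \<le> \<eta>)"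
proof -
  have "uniformly_continuous_on {- R0..R0} (\<lambda>t. \<bar>t\<bar> powr (p - 1))"
    using p_gt_1 by (intro compact_uniformly_continuous continuous_on_abs_powr) auto
  then obtain d0 where d0: "0 < d0" "\<And>t t'. t \<in> {- R0..R0} \<Longrightarrow> t' \<in> {- R0..R0} \<Longrightarrow>
      \<bar>t' - t\<bar> < d0 \<Longrightarrow> \<bar>\<bar>t'\<bar> powr (p - 1) - \<bar>t\<bar> powr (p - 1)\<bar> < \<eta>"
    unfolding uniformly_continuous_on_def dist_real_def using assms by metis
  have "\<bar>\<bar>t j\<bar> powr (p - 1) - \<bar>us $ j\<bar> powr (p - 1)\<bar> \<le> \<eta>"
    if u: "norm (u - us) < min 1 d0"
      and t: "\<forall>j. min (us $ j) (u $ j) \<le> t j \<and> t j \<le> max (us $ j) (u $ j)" for u t j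
  proof -
    have "norm u \<le> norm us + 1"
      using u norm_triangle_ineq2[of u us] by simp
    then have "\<bar>us $ j\<bar> \<le> R0" "\<bar>u $ j\<bar> \<le> R0"
      using component_le_norm_cart[of us j] component_le_norm_cart[of u j] by (simp_all add: R0_def)
    then have "us $ j \<in> {- R0..R0}" "t j \<in> {- R0..R0}"
      using t[rule_format, of j] by (auto simp: min_def max_def split: if_splits)
    moreover have "\<bar>t j - us $ j\<bar> \<le> \<bar>u $ j - us $ j\<bar>"
      using t[rule_format, of j] by (auto simp: min_def max_def split: if_splits)
    then have "\<bar>t j - us $ j\<bar> < d0"
      using u component_le_norm_cart[of "u - us" j] by simp
    ultimately show ?thesis
      using d0(2) by fastforce
  qed
  then show ?thesis
    using d0(1) by (intro exI[of _ "min 1 d0"]) auto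
qed

lemma energy_gap_second_order:
  assumes "0 < \<eta>"
  shows "\<exists>d>0. \<forall>u. normq_pow u = 1 \<longrightarrow> norm (u - us) < d \<longrightarrow>
    \<bar>Q_h x0 L V \<omega> u - Q_h x0 L V \<omega> us - lagrangian_hessian (u - us) / 2\<bar> \<le> \<eta> * (norm (u - us))\<^sup>2"
proof -
  define \<eta>' where "\<eta>' = \<eta> / (p * \<bar>lams\<bar> * h + 1)"
  have "0 \<le> p * \<bar>lams\<bar> * h"
    using p_gt_1 h_pos by simp
  then have \<eta>': "0 < \<eta>'" "p * \<bar>lams\<bar> * h * \<eta>' \<le> \<eta>"
    using assms by (simp_all add: \<eta>'_def field_simps add_nonneg_pos)
  obtain d where "0 < d" and near: "\<forall>u t. norm (u - us) < d \<longrightarrow>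
      (\<forall>j. min (us $ j) (u $ j) \<le> t j \<and> t j \<le> max (us $ j) (u $ j)) \<longrightarrow>
      (\<forall>j. \<bar>\<bar>t j\<bar> powr (p - 1) - \<bar>us $ j\<bar> powr (p - 1)\<bar> \<le> \<eta>')"
    using abs_powr_near_us[OF \<eta>'(1)] by blast
  have "\<bar>Q_h x0 L V \<omega> u - Q_h x0 L V \<omega> us - lagrangian_hessian (u - us) / 2\<bar>
      \<le> \<eta> * (norm (u - us))\<^sup>2" if u: "normq_pow u = 1" "norm (u - us) < d" for u
  proof -
    obtain t where t: "\<forall>j. min (us $ j) (u $ j) \<le> t j \<and> t j \<le> max (us $ j) (u $ j)"
      and gap: "Q_h x0 L V \<omega> u - Q_h x0 L V \<omega> us = lagrangian_hessian (u - us) / 2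
        - p * lams * h * (\<Sum>j\<in>UNIV.
            (\<bar>t j\<bar> powr (p - 1) - \<bar>us $ j\<bar> powr (p - 1)) * (u $ j - us $ j)\<^sup>2)"
      using energy_gap_taylor[OF u(1)] by blast
    let ?R = "\<Sum>j\<in>UNIV. (\<bar>t j\<bar> powr (p - 1) - \<bar>us $ j\<bar> powr (p - 1)) * (u $ j - us $ j)\<^sup>2"
    have "\<bar>?R\<bar> \<le> (\<Sum>j\<in>UNIV. \<eta>' * (u $ j - us $ j)\<^sup>2)"
      using near u(2) t
      by (intro order_trans[OF sum_abs] sum_mono) (simp add: abs_mult mult_right_mono)
    also have "\<dots> = \<eta>' * (norm (u - us))\<^sup>2"
      by (simp add: power2_norm_vec sum_distrib_left)
    finally have "p * \<bar>lams\<bar> * h * \<bar>?R\<bar> \<le> p * \<bar>lams\<bar> * h * (\<eta>' * (norm (u - us))\<^sup>2)"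
      using \<open>0 \<le> p * \<bar>lams\<bar> * h\<close> by (rule mult_left_mono)
    also have "\<dots> \<le> \<eta> * (norm (u - us))\<^sup>2"
      using \<eta>'(2) by (simp add: mult.assoc[symmetric] mult_right_mono)
    finally show ?thesis
      using gap p_gt_1 h_pos by (simp add: abs_mult mult.assoc)
  qed
  with \<open>0 < d\<close> show ?thesis
    by blast
qed

lemma energy_gap_upper:
  "\<exists>C>0. \<exists>d>0. \<forall>u. normq_pow u = 1 \<longrightarrow> norm (u - us) < d \<longrightarrow>
     Q_h x0 L V \<omega> u - Q_h x0 L V \<omega> us \<le> C * (norm1_h x0 L (u - us))\<^sup>2"
proof -
  obtain K where "0 \<le> K" and K: "\<And>e. \<bar>lagrangian_hessian e\<bar> \<le> K * (norm e)\<^sup>2"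
    using lagrangian_hessian_bound by blast
  obtain d where "0 < d" and d: "\<forall>u. normq_pow u = 1 \<longrightarrow> norm (u - us) < d \<longrightarrow>
      \<bar>Q_h x0 L V \<omega> u - Q_h x0 L V \<omega> us - lagrangian_hessian (u - us) / 2\<bar> \<le> 1 * (norm (u - us))\<^sup>2"
    using energy_gap_second_order[of 1] by auto
  have "Q_h x0 L V \<omega> u - Q_h x0 L V \<omega> us \<le> (K / 2 + 1) / h * (norm1_h x0 L (u - us))\<^sup>2"
    if "normq_pow u = 1" "norm (u - us) < d" for u
  proof -
    have "Q_h x0 L V \<omega> u - Q_h x0 L V \<omega> us \<le> (K / 2 + 1) * (norm (u - us))\<^sup>2"
      using d[rule_format, OF that] K[of "u - us"] by (simp add: abs_le_iff field_simps)
    also have "\<dots> = (K / 2 + 1) / h * (h * (norm (u - us))\<^sup>2)"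
      using h_pos by simp
    also have "\<dots> \<le> (K / 2 + 1) / h * (norm1_h x0 L (u - us))\<^sup>2"
      using norm1_h_lower[OF L_pos, of "u - us" x0] h_pos \<open>0 \<le> K\<close>
      by (intro mult_left_mono) (simp_all add: h_def)
    finally show ?thesis .
  qed
  moreover have "0 < (K / 2 + 1) / h"
    using \<open>0 \<le> K\<close> h_pos by simp
  ultimately show ?thesis
    using \<open>0 < d\<close> by blast
qed

lemma normal_tangent_split_near:
  assumes "normq_pow u = 1" "norm (u - us) \<le> 1" "2 * kappa * norm us * norm (u - us) \<le> 1"
  shows "\<bar>inner_h L (powu p us) (u - us)\<bar> \<le> kappa * (norm (u - us))\<^sup>2"
    and "norm (u - us) \<le> 2 * norm (u - us - inner_h L (powu p us) (u - us) *\<^sub>R us)"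
proof -
  let ?e = "u - us"
  let ?s = "inner_h L (powu p us) ?e"
  have "norm u \<le> R0"
    using assms(2) norm_triangle_ineq2[of u us] norm_ge_zero[of us] unfolding R0_def by linarith
  then show s: "\<bar>?s\<bar> \<le> kappa * (norm ?e)\<^sup>2"
    by (rule normal_coordinate_bound[OF assms(1)])
  have "\<bar>?s\<bar> * norm us \<le> kappa * (norm ?e)\<^sup>2 * norm us"
    using s by (rule mult_right_mono) simp
  also have "\<dots> = (kappa * norm us * norm ?e) * norm ?e"
    by (simp add: power2_eq_square mult_ac)
  also have "\<dots> \<le> 1 / 2 * norm ?e"
    using assms(3) by (intro mult_right_mono) auto
  finally have "\<bar>?s\<bar> * norm us \<le> 1 / 2 * norm ?e" .
  moreover have "norm ?e \<le> norm (?e - ?s *\<^sub>R us) + \<bar>?s\<bar> * norm us"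
    using norm_triangle_ineq[of "?e - ?s *\<^sub>R us" "?s *\<^sub>R us"] by simp
  ultimately show "norm ?e \<le> 2 * norm (?e - ?s *\<^sub>R us)"
    by linarith
qed

lemma lagrangian_hessian_near_lower:
  assumes coercive: "\<forall>\<xi>\<in>tangent_h L p us. c * (norm1_h x0 L \<xi>)\<^sup>2 \<le> lagrangian_hessian \<xi>"
    and "0 < c" "normq_pow u = 1" "norm (u - us) \<le> 1" "2 * kappa * norm us * norm (u - us) \<le> 1"
  shows "c * h / 4 * (norm (u - us))\<^sup>2 - 2 * ((p - 1) * \<bar>lams\<bar> * kappa\<^sup>2) * (norm (u - us))^4
    \<le> lagrangian_hessian (u - us)"
proof -
  let ?e = "u - us"
  let ?s = "inner_h L (powu p us) ?e"
  let ?\<xi> = "?e - ?s *\<^sub>R us"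
  note split = normal_tangent_split_near[OF assms(3-5)]
  have tangent: "?\<xi> \<in> tangent_h L p us"
    by (rule tangent_part_in_tangent)
  have "c * h / 4 * (norm ?e)\<^sup>2 \<le> c * (h * (norm ?\<xi>)\<^sup>2)"
    using split(2) assms(2) h_pos power_mono[OF split(2), of 2]
    by (simp add: power_mult_distrib mult_left_mono)
  also have "\<dots> \<le> c * (norm1_h x0 L ?\<xi>)\<^sup>2"
    using norm1_h_lower[OF L_pos, of ?\<xi> x0] assms(2) by (simp add: h_def)
  also have "\<dots> \<le> lagrangian_hessian ?\<xi>"
    using coercive tangent by blast
  finally have tangential: "c * h / 4 * (norm ?e)\<^sup>2 \<le> lagrangian_hessian ?\<xi>" .
  have "?s\<^sup>2 \<le> (kappa * (norm ?e)\<^sup>2)\<^sup>2"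
    using split(1) by (metis abs_ge_zero power2_abs power_mono)
  then have "(p - 1) * \<bar>lams\<bar> * ?s\<^sup>2 \<le> (p - 1) * \<bar>lams\<bar> * (kappa * (norm ?e)\<^sup>2)\<^sup>2"
    using p_gt_1 by (intro mult_left_mono) auto
  also have "\<dots> = (p - 1) * \<bar>lams\<bar> * kappa\<^sup>2 * (norm ?e)^4"
    by (simp add: power2_eq_square power4_eq_xxxx)
  finally have "(p - 1) * \<bar>lams\<bar> * ?s\<^sup>2 \<le> (p - 1) * \<bar>lams\<bar> * kappa\<^sup>2 * (norm ?e)^4" .
  moreover have "0 \<le> (p - 1) * (\<bar>lams\<bar> - lams) * ?s\<^sup>2"
    using p_gt_1 by (intro mult_nonneg_nonneg) auto
  moreover have "(p - 1) * (\<bar>lams\<bar> - lams) * ?s\<^sup>2 = (1 - p) * lams * ?s\<^sup>2 + (p - 1) * \<bar>lams\<bar> * ?s\<^sup>2"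
    by (simp add: algebra_simps)
  ultimately have normal:
      "- 2 * ((p - 1) * \<bar>lams\<bar> * kappa\<^sup>2) * (norm ?e)^4 \<le> 2 * (1 - p) * lams * ?s\<^sup>2"
    by linarith
  have "?e = ?s *\<^sub>R us + ?\<xi>"
    by simp
  then have "lagrangian_hessian ?e = 2 * (1 - p) * lams * ?s\<^sup>2 + lagrangian_hessian ?\<xi>"
    using lagrangian_hessian_tangent_split[OF tangent, of ?s] by simp
  with tangential normal show ?thesis
    by linarith
qed

lemma energy_gap_lower:
  assumes "0 < c"
    and coercive: "\<forall>\<xi>\<in>tangent_h L p us. c * (norm1_h x0 L \<xi>)\<^sup>2 \<le> lagrangian_hessian \<xi>"
  shows "\<exists>d>0. \<forall>u. normq_pow u = 1 \<longrightarrow> norm (u - us) < d \<longrightarrow>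
    c * h / 16 * (norm (u - us))\<^sup>2 \<le> Q_h x0 L V \<omega> u - Q_h x0 L V \<omega> us"
proof -
  define a where "a = (p - 1) * \<bar>lams\<bar> * kappa\<^sup>2"
  have a: "0 \<le> a"
    using p_gt_1 by (simp add: a_def)
  have "0 < c * h / 32"
    using assms(1) h_pos by simp
  then obtain d1 where "0 < d1" and d1: "\<forall>u. normq_pow u = 1 \<longrightarrow> norm (u - us) < d1 \<longrightarrow>
      \<bar>Q_h x0 L V \<omega> u - Q_h x0 L V \<omega> us - lagrangian_hessian (u - us) / 2\<bar>
        \<le> c * h / 32 * (norm (u - us))\<^sup>2"
    using energy_gap_second_order by blast
  define d where "d = min (min 1 d1) (min (1 / (2 * kappa * norm us + 1)) (c * h / (32 * (a + 1))))"
  have "c * h / 16 * (norm (u - us))\<^sup>2 \<le> Q_h x0 L V \<omega> u - Q_h x0 L V \<omega> us"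
    if u: "normq_pow u = 1" "norm (u - us) < d" for u
  proof -
    let ?N = "norm (u - us)"
    have pos: "0 < 2 * kappa * norm us + 1" "0 < 32 * (a + 1)"
      using kappa_nonneg a by (simp_all add: add_nonneg_pos)
    have N: "?N \<le> 1" "?N < d1" "?N * (2 * kappa * norm us + 1) \<le> 1" "?N * (32 * (a + 1)) \<le> c * h"
      using u(2) pos by (auto simp: d_def less_divide_eq)
    have "?N * (2 * kappa * norm us + 1) = 2 * kappa * norm us * ?N + ?N"
      by (simp add: algebra_simps)
    then have "2 * kappa * norm us * ?N \<le> 1"
      using N(3) norm_ge_zero[of "u - us"] by linarith
    note hessian = lagrangian_hessian_near_lower[OF coercive assms(1) u(1) N(1) this]
    have "?N * (32 * (a + 1)) = 32 * (a * ?N) + 32 * ?N"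
      by (simp add: algebra_simps)
    then have "a * ?N \<le> c * h / 32"
      using N(4) norm_ge_zero[of "u - us"] by linarith
    moreover have "a * ?N\<^sup>2 \<le> a * ?N"
      using N(1) a by (intro mult_left_mono) (auto simp: power2_eq_square mult_left_le)
    ultimately have "(a * ?N\<^sup>2) * ?N\<^sup>2 \<le> (c * h / 32) * ?N\<^sup>2"
      by (intro mult_right_mono) auto
    then have "a * ?N ^ 4 \<le> c * h / 32 * ?N\<^sup>2"
      by (simp add: power2_eq_square power4_eq_xxxx mult.assoc)
    moreover have "\<bar>Q_h x0 L V \<omega> u - Q_h x0 L V \<omega> us - lagrangian_hessian (u - us) / 2\<bar>
        \<le> c * h / 32 * ?N\<^sup>2"
      using d1 u(1) N(2) by blast
    ultimately show ?thesis
      using hessian unfolding a_def by linarith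
  qed
  moreover have "0 < d"
    using \<open>0 < d1\<close> assms(1) h_pos kappa_nonneg a by (simp add: d_def add_nonneg_pos)
  ultimately show ?thesis
    by blast
qed

lemma local_quadratic_growth:
  assumes "0 < c"
    and coercive: "\<forall>\<xi>\<in>tangent_h L p us. c * (norm1_h x0 L \<xi>)\<^sup>2 \<le> lagrangian_hessian \<xi>"
  shows "\<exists>\<delta>0>0. \<forall>\<delta>. 0 < \<delta> \<and> \<delta> \<le> \<delta>0 \<longrightarrow>
    (\<exists>C1>0. \<exists>C2>0. \<forall>u\<in>U_h x0 L \<delta> us \<inter> S_h L p.
        C1 * (norm1_h x0 L (u - us))\<^sup>2 \<le> Q_h x0 L V \<omega> u - Q_h x0 L V \<omega> us \<and>
        Q_h x0 L V \<omega> u - Q_h x0 L V \<omega> us \<le> C2 * (norm1_h x0 L (u - us))\<^sup>2) \<and>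
    (\<forall>u\<in>U_h x0 L \<delta> us \<inter> S_h L p. u \<noteq> us \<longrightarrow> Q_h x0 L V \<omega> us < Q_h x0 L V \<omega> u)"
proof -
  obtain d1 where "0 < d1" and low: "\<And>u. normq_pow u = 1 \<Longrightarrow> norm (u - us) < d1 \<Longrightarrow>
      c * h / 16 * (norm (u - us))\<^sup>2 \<le> Q_h x0 L V \<omega> u - Q_h x0 L V \<omega> us"
    using energy_gap_lower[OF assms] by blast
  obtain C2 d2 where "0 < C2" "0 < d2" and up: "\<And>u. normq_pow u = 1 \<Longrightarrow> norm (u - us) < d2 \<Longrightarrow>
      Q_h x0 L V \<omega> u - Q_h x0 L V \<omega> us \<le> C2 * (norm1_h x0 L (u - us))\<^sup>2"
    using energy_gap_upper by blast
  obtain K where "0 < K" and K: "\<And>e :: 'm grid. (norm1_h x0 L e)\<^sup>2 \<le> K * (norm e)\<^sup>2"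
    using norm1_h_upper[OF L_pos, of x0] by blast
  define \<delta>0 where "\<delta>0 = sqrt h * min d1 d2 / 2"
  define C1 where "C1 = c * h / (16 * K)"
  have bounds: "C1 * (norm1_h x0 L (u - us))\<^sup>2 \<le> Q_h x0 L V \<omega> u - Q_h x0 L V \<omega> us
      \<and> Q_h x0 L V \<omega> u - Q_h x0 L V \<omega> us \<le> C2 * (norm1_h x0 L (u - us))\<^sup>2
      \<and> (u \<noteq> us \<longrightarrow> Q_h x0 L V \<omega> us < Q_h x0 L V \<omega> u)"
    if u: "u \<in> U_h x0 L \<delta>0 us \<inter> S_h L p" for u
  proof -
    have N: "norm (u - us) < d1" "norm (u - us) < d2"
      using u U_h_subset_ball[of "min d1 d2" x0] \<open>0 < d1\<close> \<open>0 < d2\<close> by (auto simp: \<delta>0_def)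
    have sphere: "normq_pow u = 1"
      using u by (simp add: S_h_def normq_h_eq_1_iff)
    have "C1 * (norm1_h x0 L (u - us))\<^sup>2 \<le> C1 * (K * (norm (u - us))\<^sup>2)"
      using K[of "u - us"] assms(1) h_pos \<open>0 < K\<close> by (intro mult_left_mono) (simp_all add: C1_def)
    also have "\<dots> = c * h / 16 * (norm (u - us))\<^sup>2"
      using \<open>0 < K\<close> by (simp add: C1_def)
    finally have "C1 * (norm1_h x0 L (u - us))\<^sup>2 \<le> c * h / 16 * (norm (u - us))\<^sup>2" .
    moreover have "u \<noteq> us \<Longrightarrow> 0 < c * h / 16 * (norm (u - us))\<^sup>2"
      using assms(1) h_pos by simp
    ultimately show ?thesis
      using low[OF sphere N(1)] up[OF sphere N(2)] by linarith
  qed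
  have "0 < \<delta>0" "0 < C1"
    using h_pos \<open>0 < d1\<close> \<open>0 < d2\<close> \<open>0 < K\<close> assms(1) by (simp_all add: \<delta>0_def C1_def)
  moreover have "U_h x0 L \<delta> us \<subseteq> U_h x0 L \<delta>0 us" if "\<delta> \<le> \<delta>0" for \<delta>
    using that by (auto simp: U_h_def)
  ultimately show ?thesis
    using bounds \<open>0 < C2\<close> by blast
qed

end

theorem mainTheorem16:
  fixes x0 L p \<omega> lams :: real and V :: "real \<Rightarrow> real" and us :: "'m::finite grid"
  assumes L_pos: "L > 0"
    and A1_p: "1 < p"
    and A1_V: "\<forall>x. V x \<ge> 0" "bounded (range V)"
    and gs: "is_ground_state x0 L V \<omega> p us"
    and mult: "\<forall>j. A_h x0 L V \<omega> us $ j = lams * (\<bar>us $ j\<bar> powr (p - 1) * us $ j)"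
  shows
   "(\<exists>\<delta>>0. \<exists>W \<epsilon> C. \<exists>r :: 'm grid \<Rightarrow> real.
        open W \<and> 0 \<in> W \<and> \<epsilon> > 0 \<and> C2_on W r \<and> r 0 = 0 \<and>
        (\<forall>\<xi>\<in>tangent_h L p us \<inter> W. \<bar>r \<xi>\<bar> < \<epsilon> \<and>
            (\<forall>s. \<bar>s\<bar> < \<epsilon> \<longrightarrow>
               (normq_h L (p + 1) ((1 + s) *\<^sub>R us + \<xi>) = 1 \<longleftrightarrow> s = r \<xi>))) \<and>
        (\<forall>u \<in> U_h x0 L \<delta> us. \<forall>s. \<forall>\<xi>\<in>tangent_h L p us.
            u = (1 + s) *\<^sub>R us + \<xi> \<longrightarrow> \<xi> \<in> W \<and> \<bar>s\<bar> < \<epsilon>) \<and>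
        (\<forall>\<xi>\<in>tangent_h L p us \<inter> W. \<bar>r \<xi>\<bar> \<le> C * (normq_h L (p + 1) \<xi>)\<^sup>2) \<and>
        (\<forall>\<xi>\<in>tangent_h L p us. (normq_h L (p + 1) \<xi>)\<^sup>2 \<le> C * (norm1_h x0 L \<xi>)\<^sup>2))
    \<and>
    ((\<omega> > - lambda0' x0 L V TYPE('m) \<and>
      (\<exists>c>0. \<forall>\<xi>\<in>tangent_h L p us.
         2 * (inner_h L (A_h x0 L V \<omega> \<xi>) \<xi> - p * lams * inner_h L (\<chi> j. \<bar>us $ j\<bar> powr (p - 1) * \<xi> $ j) \<xi>)
           \<ge> c * (norm1_h x0 L \<xi>)\<^sup>2))
     \<longrightarrow>
     (\<exists>\<delta>0>0. \<forall>\<delta>. 0 < \<delta> \<and> \<delta> \<le> \<delta>0 \<longrightarrow>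
        (\<exists>C1>0. \<exists>C2>0. \<forall>u\<in>U_h x0 L \<delta> us \<inter> S_h L p.
            C1 * (norm1_h x0 L (u - us))\<^sup>2 \<le> Q_h x0 L V \<omega> u - Q_h x0 L V \<omega> us \<and>
            Q_h x0 L V \<omega> u - Q_h x0 L V \<omega> us \<le> C2 * (norm1_h x0 L (u - us))\<^sup>2) \<and>
        (\<forall>u\<in>U_h x0 L \<delta> us \<inter> S_h L p. u \<noteq> us \<longrightarrow> Q_h x0 L V \<omega> us < Q_h x0 L V \<omega> u)))"
proof -
  have "normq_h L (p + 1) us = 1"
    using gs by (simp add: is_ground_state_def S_h_def)
  then interpret ground_state_multiplier L p us x0 V \<omega> lams
    using L_pos A1_p mult by unfold_locales auto
  show ?thesis
    by (rule conjI[OF implicit_normalisation], intro impI, elim conjE exE,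
        erule local_quadratic_growth[unfolded lagrangian_hessian_def, rotated], assumption)
qed

end
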